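(* For integers $d\ge 2$ and $n> d$, $$a_{n,d}=\sum_{r_1=0}^{n_1-1}\sum_{c_1=0}^{r_1}\cdots \sum_{r_{d}=0}^{n_{d}-1}\sum_{c_{d}=0}^{r_{d}} (-1)^{r}\, 2^{c}\, (n-r-c)! \prod_{k=1}^{d}\binom{n_k-r_k}{c_k} \sum_{\substack{l_{1,1}+\cdots+l_{c_1,1}=r_1\\ l_{i,1}\ge 1}}\cdots \sum_{\substack{l_{1,d}+\cdots+l_{c_d,d}=r_d\\ l_{i,d}\ge 1}} q_{n,d}(L),$$ where $r=\sum_{k=1}^d r_k$, $c=\sum_{k=1}^d c_k$, $L=[l_1,\dots,l_c]$ is the concatenation of the lists $(l_{1,1},\dots,l_{c_1,1}),\dots,(l_{1,d},\dots,l_{c_d,d})$, and $$q_{n,d}([l_1,\dots,l_c])=\sum_{\substack{J_1\sqcup\cdots\sqcup J_d=\{1,\dots,c\}\\ n_k\ge \sum_{i\in J_k} l_i \ \forall k}}\ \prod_{k=1}^{d}\binom{n_k-\sum_{i\in J_k}l_i}{|J_k|}\,|J_k|!\,,$$ the sum running over all ordered tuples $(J_1,\dots,J_d)$ of pairwise disjoint (possibly empty) sets whose union is $\{1,\dots,c\}$.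
   Context: For $d\ge 1$ and $n\ge 1$, $a_{n,d}$ denotes the number of permutations $\pi$ of $\{1,\dots,n\}$ such that $|\pi(i+d)-\pi(i)|\neq d$ for all $1\le i\le n-d$. For $k=1,\dots,d$, $n_k=|\{1\le i\le n : i\equiv k \pmod d\}|$. A sum over compositions $l_{1,k}+\cdots+l_{c_k,k}=r_k$ with all $l_{i,k}\ge1$ is empty (contributes $0$) if there are no such compositions, and when $c_k=r_k=0$ it consists of the single empty composition. *)

theory Defs
  imports Main "HOL-Combinatorics.Permutations"
begin

definition a_seq :: "nat \<Rightarrow> nat \<Rightarrow> nat" where
  "a_seq n d = card {\<pi>. \<pi> permutes {1..n} \<and>
      (\<forall>i. 1 \<le> i \<and> i + d \<le> n \<longrightarrow> \<bar>int (\<pi> (i + d)) - int (\<pi> i)\<bar> \<noteq> int d)}"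

definition nk :: "nat \<Rightarrow> nat \<Rightarrow> nat \<Rightarrow> nat" where
  "nk n d k = card {i \<in> {1..n}. i mod d = k mod d}"

definition compositions :: "nat \<Rightarrow> nat \<Rightarrow> nat list set" where
  "compositions r c = {l. length l = c \<and> (\<forall>x\<in>set l. 1 \<le> x) \<and> sum_list l = r}"

text \<open>q_{n,d}([l_1,...,l_c]); list L is 1-indexed via L ! (i - 1).\<close>
definition q_nd :: "nat \<Rightarrow> nat \<Rightarrow> nat list \<Rightarrow> nat" where
  "q_nd n d L = (\<Sum>J \<in> {J \<in> PiE {1..d} (\<lambda>k. Pow {1..length L}).
        (\<forall>k\<in>{1..d}. \<forall>k'\<in>{1..d}. k \<noteq> k' \<longrightarrow> J k \<inter> J k' = {}) \<and>
        (\<Union>k\<in>{1..d}. J k) = {1..length L} \<and>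
        (\<forall>k\<in>{1..d}. (\<Sum>i\<in>J k. L ! (i - 1)) \<le> nk n d k)}.
      \<Prod>k=1..d. ((nk n d k - (\<Sum>i\<in>J k. L ! (i - 1))) choose card (J k)) * fact (card (J k)))"

end

theory Submission
  imports Defs
begin

text \<open>
  Inclusion--exclusion over the set \<open>S\<close> of positions \<open>i\<close> at which \<open>|\<pi>(i+d) - \<pi>(i)| = d\<close> is
  enforced turns \<open>a\<^sub>n\<^sub>,\<^sub>d\<close> into an alternating sum of counts of permutations satisfying
  all constraints in \<open>S\<close>. The positions split into the \<open>d\<close> residue chains
  \<open>k, k + d, k + 2d, \<dots>\<close> of lengths \<open>n\<^sub>k\<close>, and on each chain \<open>S\<close> is a union of maximal
  runs. A run of \<open>l\<close> consecutive constraints covers \<open>l + 1\<close> chain elements, and the constraints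
  hold exactly when \<open>\<pi>\<close> maps these elements, in increasing or decreasing order, onto \<open>l + 1\<close>
  consecutive elements of some chain. So for \<open>c\<close> runs of total length \<open>r\<close> one chooses a
  direction per run (\<open>2\<^sup>c\<close>), pairwise disjoint target intervals (distributing the runs over
  the chains and placing \<open>j\<close> intervals of total length \<open>s + j\<close> into a chain of length \<open>m\<close> in
  \<open>C(m - s, j) j!\<close> ways, which gives \<open>q\<^sub>n\<^sub>,\<^sub>d\<close>), and a bijection between the remaining
  \<open>n - r - c\<close> points. Finally, the sets \<open>S\<close> whose runs on chain \<open>k\<close> have prescribed
  lengths \<open>l\<^sub>1, \<dots>, l\<^sub>c\<close> (in order) with sum \<open>r\<close> are counted by \<open>C(n\<^sub>k - r, c)\<close>.
\<close>

section \<open>Inclusion--exclusion\<close>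

lemma sum_Pow_neg_one_power_card:
  assumes "finite B"
  shows "(\<Sum>S\<in>Pow B. (-1::'a::ring_1) ^ card S) = (if B = {} then 1 else 0)"
proof (cases "B = {}")
  case False
  have "card {S. S \<subseteq> B \<and> {} \<subseteq> S \<and> even (card S)} = card {S. S \<subseteq> B \<and> {} \<subseteq> S \<and> odd (card S)}"
    using assms False by (intro card_subsupersets_even_odd) auto
  then have "(\<Sum>S\<in>Pow B. (-1::'a) ^ card S) = 0"
    using assms by (intro sum_alternating_cancels) (simp_all add: Pow_def)
  then show ?thesis using False by simp
qed simp

lemma inclusion_exclusion_bad_sets:
  fixes bad :: "'a \<Rightarrow> 'e set"
  assumes P: "finite P" and E: "finite E" and bad: "\<And>x. x \<in> P \<Longrightarrow> bad x \<subseteq> E"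
  shows "int (card {x \<in> P. bad x = {}}) = (\<Sum>S\<in>Pow E. (-1) ^ card S * int (card {x \<in> P. S \<subseteq> bad x}))"
proof -
  have "int (card {x \<in> P. bad x = {}}) = (\<Sum>x\<in>P. \<Sum>S\<in>Pow (bad x). (-1) ^ card S)"
    using P by (simp add: sum_Pow_neg_one_power_card finite_subset[OF bad E] sum.If_cases Int_def)
  also have "\<dots> = (\<Sum>x\<in>P. \<Sum>S\<in>Pow E. if S \<subseteq> bad x then (-1) ^ card S else 0)"
  proof (rule sum.cong[OF refl])
    fix x assume "x \<in> P"
    then have "Pow (bad x) = {S \<in> Pow E. S \<subseteq> bad x}" using bad by auto
    then show "(\<Sum>S\<in>Pow (bad x). (-1::int) ^ card S) =
        (\<Sum>S\<in>Pow E. if S \<subseteq> bad x then (-1) ^ card S else 0)"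
      using E by (simp only: sum.inter_filter finite_Pow_iff)
  qed
  also have "\<dots> = (\<Sum>S\<in>Pow E. (-1) ^ card S * int (card {x \<in> P. S \<subseteq> bad x}))"
    using P by (subst sum.swap) (simp add: sum.inter_filter[symmetric] mult.commute)
  finally show ?thesis .
qed

section \<open>Permutations with prescribed values\<close>

lemma partial_bij_extends_to_permutation:
  assumes U: "finite U" and G: "inj_on fst G" "inj_on snd G" "fst ` G \<subseteq> U" "snd ` G \<subseteq> U"
  obtains h where "h permutes U" "\<And>a b. (a, b) \<in> G \<Longrightarrow> h a = b"
proof -
  define g where "g = snd \<circ> the_inv_into G fst"
  have g: "bij_betw g (fst ` G) (snd ` G)"
    unfolding g_def using bij_betw_the_inv_into[OF inj_on_imp_bij_betw[OF G(1)]]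
    by (rule bij_betw_trans) (rule inj_on_imp_bij_betw[OF G(2)])
  have "card (U - fst ` G) = card (U - snd ` G)"
    using G U by (simp add: card_Diff_subset finite_subset card_image)
  then obtain g' where g': "bij_betw g' (U - fst ` G) (U - snd ` G)"
    using U finite_same_card_bij by blast
  define h where "h x = (if x \<in> fst ` G then g x else if x \<in> U then g' x else x)" for x
  have "bij_betw h (fst ` G) (snd ` G)"
    using g by (rule bij_betw_cong[THEN iffD1, rotated]) (simp add: h_def)
  moreover have "bij_betw h (U - fst ` G) (U - snd ` G)"
    using g' by (rule bij_betw_cong[THEN iffD1, rotated]) (simp add: h_def)
  ultimately have "bij_betw h (fst ` G \<union> (U - fst ` G)) (snd ` G \<union> (U - snd ` G))"
    by (rule bij_betw_combine) blast
  then have "bij_betw h U U" using G by (simp add: Un_absorb1)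
  then have "h permutes U" by (rule bij_imp_permutes) (use G(3) in \<open>auto simp: h_def\<close>)
  moreover have "h a = b" if ab: "(a, b) \<in> G" for a b
  proof -
    have "the_inv_into G fst a = (a, b)" using the_inv_into_f_f[OF G(1) ab] by simp
    moreover have "a \<in> fst ` G" using ab by force
    ultimately show ?thesis by (simp add: h_def g_def)
  qed
  ultimately show ?thesis by (rule that)
qed

lemma permutes_extending_eq_image:
  assumes h: "h permutes U" and hG: "\<And>a b. (a, b) \<in> G \<Longrightarrow> h a = b"
  shows "{\<pi>. \<pi> permutes U \<and> (\<forall>(a, b)\<in>G. \<pi> a = b)} = (\<lambda>\<tau>. h \<circ> \<tau>) ` {\<tau>. \<tau> permutes (U - fst ` G)}"
proof (intro equalityI subsetI)
  fix \<pi> assume "\<pi> \<in> {\<pi>. \<pi> permutes U \<and> (\<forall>(a, b)\<in>G. \<pi> a = b)}"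
  then have \<pi>: "\<pi> permutes U" "\<And>a b. (a, b) \<in> G \<Longrightarrow> \<pi> a = b" by auto
  have "inv h \<circ> \<pi> permutes U" by (intro permutes_compose \<pi> permutes_inv h)
  moreover have "(inv h \<circ> \<pi>) a = a" if a: "a \<in> fst ` G" for a
  proof -
    obtain b where "(a, b) \<in> G" using a by force
    then have "\<pi> a = h a" using \<pi>(2) hG by simp
    then show ?thesis using permutes_inverses(2)[OF h] by simp
  qed
  ultimately have "inv h \<circ> \<pi> permutes (U - fst ` G)" by (auto simp: permutes_def)
  moreover have "\<pi> = h \<circ> (inv h \<circ> \<pi>)" using permutes_inverses(1)[OF h] by (simp add: fun_eq_iff)
  ultimately show "\<pi> \<in> (\<lambda>\<tau>. h \<circ> \<tau>) ` {\<tau>. \<tau> permutes (U - fst ` G)}" by blast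
next
  fix \<pi> assume "\<pi> \<in> (\<lambda>\<tau>. h \<circ> \<tau>) ` {\<tau>. \<tau> permutes (U - fst ` G)}"
  then obtain \<tau> where \<tau>: "\<tau> permutes (U - fst ` G)" and \<pi>: "\<pi> = h \<circ> \<tau>" by blast
  have "\<pi> permutes U" unfolding \<pi> using h permutes_subset[OF \<tau>] by (intro permutes_compose) auto
  moreover have "\<pi> a = b" if "(a, b) \<in> G" for a b
  proof -
    have "a \<notin> U - fst ` G" using that by force
    then have "\<tau> a = a" by (rule permutes_not_in[OF \<tau>])
    then show ?thesis using hG[OF that] by (simp add: \<pi>)
  qed
  ultimately show "\<pi> \<in> {\<pi>. \<pi> permutes U \<and> (\<forall>(a, b)\<in>G. \<pi> a = b)}" by auto
qed

lemma card_permutes_extending: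
  assumes U: "finite U" and G: "inj_on fst G" "inj_on snd G" "fst ` G \<subseteq> U" "snd ` G \<subseteq> U"
  shows "card {\<pi>. \<pi> permutes U \<and> (\<forall>(a, b)\<in>G. \<pi> a = b)} = fact (card U - card G)"
proof -
  obtain h where h: "h permutes U" and hG: "\<And>a b. (a, b) \<in> G \<Longrightarrow> h a = b"
    using partial_bij_extends_to_permutation[OF assms] by blast
  have "inj_on (\<lambda>\<tau>. h \<circ> \<tau>) {\<tau>. \<tau> permutes (U - fst ` G)}"
    using permutes_inj[OF h] by (auto intro!: inj_onI simp: fun_eq_iff inj_eq)
  then have "card {\<pi>. \<pi> permutes U \<and> (\<forall>(a, b)\<in>G. \<pi> a = b)} = card {\<tau>. \<tau> permutes (U - fst ` G)}"
    by (simp add: permutes_extending_eq_image[OF h hG] card_image)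
  also have "\<dots> = fact (card (U - fst ` G))" using U by (simp add: card_permutations)
  also have "card (U - fst ` G) = card U - card G"
    using G U by (simp add: card_Diff_subset finite_subset card_image)
  finally show ?thesis .
qed

lemma permutes_extending_imp_inj:
  assumes \<pi>: "\<pi> permutes U" and G: "\<forall>(a, b)\<in>G. \<pi> a = b"
  shows "inj_on fst G" "inj_on snd G"
proof -
  have graph: "\<pi> (fst p) = snd p" if "p \<in> G" for p using G that by auto
  show "inj_on fst G"
    by (rule inj_onI) (metis graph prod_eq_iff)
  show "inj_on snd G"
    by (rule inj_onI) (metis graph prod_eq_iff permutes_inj[OF \<pi>] injD)
qed

section \<open>Placing disjoint intervals\<close>

definition disjoint_placements :: "nat \<Rightarrow> 'i set \<Rightarrow> ('i \<Rightarrow> nat) \<Rightarrow> ('i \<Rightarrow> nat) set" where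
  "disjoint_placements m J l = {y \<in> PiE J (\<lambda>i. {y. y + l i < m}).
     \<forall>i\<in>J. \<forall>j\<in>J. i \<noteq> j \<longrightarrow> {y i..y i + l i} \<inter> {y j..y j + l j} = {}}"

lemma finite_add_less: "finite {y :: nat. y + l < m}"
  by (rule finite_subset[of _ "{..<m}"]) auto

lemma finite_disjoint_placements: "finite J \<Longrightarrow> finite (disjoint_placements m J l)"
  unfolding disjoint_placements_def
  by (rule finite_subset[of _ "PiE J (\<lambda>i. {y. y + l i < m})"]) (auto intro: finite_PiE finite_add_less)

lemma disjoint_placements_Suc:
  "disjoint_placements (Suc m) J l =
     disjoint_placements m J l \<union> (\<Union>i\<in>J. {y \<in> disjoint_placements (Suc m) J l. y i + l i = m})"
  unfolding disjoint_placements_def by (auto simp: PiE_iff) (metis less_Suc_eq)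

lemma placement_before_last:
  assumes y: "y \<in> disjoint_placements (Suc m) J l" and ij: "i \<in> J" "j \<in> J" "j \<noteq> i"
    and last: "y i + l i = m"
  shows "y j + l j < y i"
proof (rule ccontr)
  assume "\<not> y j + l j < y i"
  moreover have "y j + l j \<le> m" using y ij by (auto simp: disjoint_placements_def PiE_iff)
  ultimately have "y j + l j \<in> {y i..y i + l i} \<inter> {y j..y j + l j}" using last by auto
  then show False using y ij unfolding disjoint_placements_def by blast
qed

lemma card_placements_ending_at:
  assumes i: "i \<in> J" and li: "l i \<le> m"
  shows "card {y \<in> disjoint_placements (Suc m) J l. y i + l i = m} =
         card (disjoint_placements (m - l i) (J - {i}) l)"
proof (rule bij_betw_same_card[symmetric],
       rule bij_betw_byWitness[where f = "\<lambda>z. z(i := m - l i)" and f' = "\<lambda>y. restrict y (J - {i})"])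
  show "\<forall>z\<in>disjoint_placements (m - l i) (J - {i}) l. restrict (z(i := m - l i)) (J - {i}) = z"
    by (auto simp: disjoint_placements_def PiE_iff fun_eq_iff extensional_def)
  show "\<forall>y\<in>{y \<in> disjoint_placements (Suc m) J l. y i + l i = m}. (restrict y (J - {i}))(i := m - l i) = y"
    using i by (auto simp: disjoint_placements_def PiE_iff fun_eq_iff extensional_def)
  show "(\<lambda>y. restrict y (J - {i})) ` {y \<in> disjoint_placements (Suc m) J l. y i + l i = m}
      \<subseteq> disjoint_placements (m - l i) (J - {i}) l"
  proof (rule image_subsetI)
    fix y assume "y \<in> {y \<in> disjoint_placements (Suc m) J l. y i + l i = m}"
    then have y: "y \<in> disjoint_placements (Suc m) J l" "y i + l i = m" by auto
    then have "y j + l j < m - l i" if "j \<in> J - {i}" for j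
      using placement_before_last[OF y(1) i _ _ y(2), of j] that by auto
    then show "restrict y (J - {i}) \<in> disjoint_placements (m - l i) (J - {i}) l"
      using y(1) unfolding disjoint_placements_def by auto
  qed
  show "(\<lambda>z. z(i := m - l i)) ` disjoint_placements (m - l i) (J - {i}) l
      \<subseteq> {y \<in> disjoint_placements (Suc m) J l. y i + l i = m}"
  proof (rule image_subsetI)
    fix z assume z: "z \<in> disjoint_placements (m - l i) (J - {i}) l"
    then have zj: "z j + l j < m - l i" if "j \<in> J - {i}" for j
      using that by (auto simp: disjoint_placements_def)
    have "z j + l j < Suc m" if "j \<in> J - {i}" for j using zj[OF that] by simp
    then have "z(i := m - l i) \<in> PiE J (\<lambda>j. {y. y + l j < Suc m})"
      using z i li by (auto simp: disjoint_placements_def PiE_iff extensional_def)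
    moreover have "{(z(i := m - l i)) a..(z(i := m - l i)) a + l a} \<inter>
        {(z(i := m - l i)) b..(z(i := m - l i)) b + l b} = {}"
      if "a \<in> J" "b \<in> J" "a \<noteq> b" for a b
      using that z zj[of a] zj[of b] li by (auto simp: disjoint_placements_def)
    ultimately show "z(i := m - l i) \<in> {y \<in> disjoint_placements (Suc m) J l. y i + l i = m}"
      using li by (simp add: disjoint_placements_def)
  qed
qed

lemma placement_count_step:
  fixes l :: "'i \<Rightarrow> nat"
  assumes "finite J"
  defines "s \<equiv> sum l J" and "j \<equiv> card J"
  shows "((m - s) choose j) * fact j +
      (\<Sum>i\<in>J. if l i \<le> m then ((m - s) choose (j - 1)) * fact (j - 1) else 0)
    = ((Suc m - s) choose j) * fact j"
proof (cases "s \<le> m")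
  case True
  then have "l i \<le> m" if "i \<in> J" for i
    using member_le_sum[OF that _ assms(1), of l] unfolding s_def by linarith
  then have "(\<Sum>i\<in>J. if l i \<le> m then ((m - s) choose (j - 1)) * fact (j - 1) else 0)
      = j * (((m - s) choose (j - 1)) * fact (j - 1))" by (simp add: j_def)
  moreover have "Suc m - s = Suc (m - s)" using True by simp
  ultimately show ?thesis
    by (cases j) (simp_all add: algebra_simps)
next
  case False
  have "(if l i \<le> m then ((m - s) choose (j - 1)) * fact (j - 1) else 0) = 0" if i: "i \<in> J" for i
  proof (cases "j = 1")
    case True
    then have "J = {i}" using i assms(1) unfolding j_def by (metis card_1_singletonE singletonD)
    then show ?thesis using False by (simp add: s_def)
  next
    case False
    moreover have "j \<noteq> 0" using i assms(1) unfolding j_def by auto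
    ultimately show ?thesis using \<open>\<not> s \<le> m\<close> by simp
  qed
  moreover have "j \<noteq> 0" using False assms(1) unfolding j_def s_def by auto
  ultimately show ?thesis using False by simp
qed

lemma card_disjoint_placements_Suc:
  assumes J: "finite J"
  shows "card (disjoint_placements (Suc m) J l) = card (disjoint_placements m J l) +
    (\<Sum>i\<in>J. if l i \<le> m then card (disjoint_placements (m - l i) (J - {i}) l) else 0)"
proof -
  let ?P = "disjoint_placements"
  let ?A = "\<lambda>i. {y \<in> ?P (Suc m) J l. y i + l i = m}"
  have fin: "finite (?P (Suc m) J l)" using J finite_disjoint_placements by blast
  have "?P m J l \<inter> (\<Union>i\<in>J. ?A i) = {}" by (auto simp: disjoint_placements_def PiE_iff)
  then have "card (?P (Suc m) J l) = card (?P m J l) + card (\<Union>i\<in>J. ?A i)"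
    using disjoint_placements_Suc[of m J l] fin
    by (metis (no_types, lifting) card_Un_disjoint finite_Un)
  also have "card (\<Union>i\<in>J. ?A i) = (\<Sum>i\<in>J. card (?A i))"
  proof (rule card_UN_disjoint)
    show "\<forall>i\<in>J. \<forall>j\<in>J. i \<noteq> j \<longrightarrow> ?A i \<inter> ?A j = {}"
      using placement_before_last[of _ m J l] by fastforce
  qed (use J fin in auto)
  also have "\<dots> = (\<Sum>i\<in>J. if l i \<le> m then card (?P (m - l i) (J - {i}) l) else 0)"
    by (rule sum.cong[OF refl]) (simp add: card_placements_ending_at)
  finally show ?thesis .
qed

lemma card_disjoint_placements:
  assumes "finite J"
  shows "card (disjoint_placements m J l) = ((m - sum l J) choose card J) * fact (card J)"
  using assms
proof (induction m arbitrary: J rule: less_induct)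
  case (less m')
  show ?case
  proof (cases m')
    case 0
    show ?thesis
    proof (cases "J = {}")
      case False
      then have "disjoint_placements 0 J l = {}" by (auto simp: disjoint_placements_def PiE_iff)
      then show ?thesis using False less.prems 0 by (simp add: card_gt_0_iff)
    qed (simp add: disjoint_placements_def 0)
  next
    case (Suc m)
    have "card (disjoint_placements (m - l i) (J - {i}) l) =
        ((m - sum l J) choose (card J - 1)) * fact (card J - 1)" if i: "i \<in> J" "l i \<le> m" for i
    proof -
      have "l i \<le> sum l J" using member_le_sum[OF i(1) _ less.prems, of l] by simp
      then have "m - l i - sum l (J - {i}) = m - sum l J"
        using i less.prems by (simp add: sum_diff1_nat)
      then show ?thesis using less.IH[of "m - l i" "J - {i}"] less.prems i Suc by simp
    qed
    then show ?thesis
      using card_disjoint_placements_Suc[OF less.prems, of m l] less.IH[of m J] less.prems Suc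
        placement_count_step[OF less.prems, of m l]
      by (simp cong: sum.cong if_cong)
  qed
qed

section \<open>Runs of boolean lists\<close>

fun leading_trues :: "bool list \<Rightarrow> nat" where
  "leading_trues [] = 0"
| "leading_trues (b # bs) = (if b then Suc (leading_trues bs) else 0)"

lemma leading_trues_le_length: "leading_trues bs \<le> length bs"
  by (induction bs) auto

lemma leading_trues_split: "bs = replicate (leading_trues bs) True @ drop (leading_trues bs) bs"
  by (induction bs) auto

lemma drop_leading_trues:
  "drop (leading_trues bs) bs = [] \<or>
   drop (leading_trues bs) bs = False # drop (Suc (leading_trues bs)) bs"
  by (induction bs) auto

lemma leading_trues_replicate:
  "leading_trues (replicate k True @ False # bs) = k" "leading_trues (replicate k True) = k"
  by (induction k) auto

function true_runs :: "nat \<Rightarrow> bool list \<Rightarrow> (nat \<times> nat) list" where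
  "true_runs i [] = []"
| "true_runs i (False # bs) = true_runs (Suc i) bs"
| "true_runs i (True # bs) =
     (i, Suc (leading_trues bs)) # true_runs (i + Suc (leading_trues bs)) (drop (leading_trues bs) bs)"
  by pat_completeness auto
termination by (relation "measure (\<lambda>(i, bs). length bs)") auto

function run_lengths :: "bool list \<Rightarrow> nat list" where
  "run_lengths [] = []"
| "run_lengths (False # bs) = run_lengths bs"
| "run_lengths (True # bs) = Suc (leading_trues bs) # run_lengths (drop (leading_trues bs) bs)"
  by pat_completeness auto
termination by (relation "measure length") auto

lemma map_snd_true_runs: "map snd (true_runs i bs) = run_lengths bs"
  by (induction i bs rule: true_runs.induct) auto

lemma true_runs_bounds:
  "(x, l) \<in> set (true_runs i bs) \<Longrightarrow> i \<le> x \<and> 1 \<le> l \<and> x + l \<le> i + length bs"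
proof (induction i bs rule: true_runs.induct)
  case (3 i bs)
  then show ?case using leading_trues_le_length[of bs] by (auto split: if_splits)
qed auto

lemma sorted_true_runs: "sorted_wrt (\<lambda>(x, l) (x', l'). x + l < x') (true_runs i bs)"
proof (induction i bs rule: true_runs.induct)
  case (3 i bs)
  let ?k = "leading_trues bs"
  have "i + Suc ?k < x'" if "(x', l') \<in> set (true_runs (i + Suc ?k) (drop ?k bs))" for x' l'
    using drop_leading_trues[of bs]
  proof
    assume "drop ?k bs = False # drop (Suc ?k) bs"
    then have "(x', l') \<in> set (true_runs (Suc (i + Suc ?k)) (drop (Suc ?k) bs))" using that by simp
    then show ?thesis using true_runs_bounds by fastforce
  qed (use that in simp)
  then show ?case using 3 by auto
qed auto

lemma distinct_true_runs: "distinct (true_runs i bs)"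
  by (induction i bs rule: true_runs.induct) (auto dest: true_runs_bounds)

lemma sorted_wrt_mem_pair:
  "sorted_wrt P xs \<Longrightarrow> a \<in> set xs \<Longrightarrow> b \<in> set xs \<Longrightarrow> a \<noteq> b \<Longrightarrow> P a b \<or> P b a"
  by (induction xs) auto

lemma true_runs_separated:
  assumes "(x, l) \<in> set (true_runs i bs)" "(x', l') \<in> set (true_runs i bs)" "(x, l) \<noteq> (x', l')"
  shows "x + l < x' \<or> x' + l' < x"
  using sorted_wrt_mem_pair[OF sorted_true_runs assms] by auto

lemma mem_true_runs_iff:
  "(\<exists>(x, l)\<in>set (true_runs i bs). x \<le> j \<and> j < x + l) \<longleftrightarrow> i \<le> j \<and> j < i + length bs \<and> bs ! (j - i)"
proof (induction i bs rule: true_runs.induct)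
  case (2 i bs)
  then show ?case by (auto simp: nth_Cons')
next
  case (3 i bs)
  let ?k = "leading_trues bs"
  have bs: "True # bs = replicate (Suc ?k) True @ drop ?k bs"
    using leading_trues_split[of bs] by simp
  have "(True # bs) ! (j - i) = (if j - i < Suc ?k then True else drop ?k bs ! (j - i - Suc ?k))"
    by (subst bs) (simp add: nth_append del: replicate_Suc)
  then show ?case using 3 leading_trues_le_length[of bs] by auto
qed auto

lemma card_true_positions: "card {j. j < length bs \<and> bs ! j} = sum_list (run_lengths bs)"
proof -
  have "card {j. j < length bs \<and> bs ! j} = length (filter (\<lambda>b. b) bs)"
    by (simp add: length_filter_conv_card)
  also have "\<dots> = sum_list (run_lengths bs)"
  proof (induction bs rule: run_lengths.induct)
    case (3 bs)
    have "length (filter (\<lambda>b. b) bs) =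
        leading_trues bs + length (filter (\<lambda>b. b) (drop (leading_trues bs) bs))"
      by (subst leading_trues_split) simp
    then show ?case using 3 by simp
  qed auto
  finally show ?thesis .
qed

lemma sum_list_run_lengths_le: "sum_list (run_lengths bs) \<le> length bs"
  using card_true_positions[of bs] card_mono[of "{..<length bs}" "{j. j < length bs \<and> bs ! j}"] by auto

lemma run_lengths_pos: "x \<in> set (run_lengths bs) \<Longrightarrow> 1 \<le> x"
  using true_runs_bounds[of _ x 0 bs] by (auto simp flip: map_snd_true_runs[of 0])

lemma run_lengths_replicate:
  "run_lengths (replicate k True @ False # bs) = (if k = 0 then run_lengths bs else k # run_lengths bs)"
  "run_lengths (replicate k True) = (if k = 0 then [] else [k])"
  by (cases k; simp add: leading_trues_replicate)+

definition lists_with_runs :: "nat \<Rightarrow> nat list \<Rightarrow> bool list set" where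
  "lists_with_runs N ls = {bs. length bs = N \<and> run_lengths bs = ls}"

lemma lists_with_runs_0: "lists_with_runs 0 ls = (if ls = [] then {[]} else {})"
  by (auto simp: lists_with_runs_def)

lemma finite_lists_with_runs: "finite (lists_with_runs N ls)"
  unfolding lists_with_runs_def
  by (rule finite_subset[OF _ finite_lists_length_eq[of "UNIV :: bool set" N]]) auto

lemma lists_with_runs_Suc:
  "lists_with_runs (Suc N) ls = Cons False ` lists_with_runs N ls \<union>
     Cons True ` {bs. length bs = N \<and> run_lengths (True # bs) = ls}"
  unfolding lists_with_runs_def
proof (intro equalityI subsetI)
  fix bs assume "bs \<in> {bs. length bs = Suc N \<and> run_lengths bs = ls}"
  then show "bs \<in> Cons False ` {bs. length bs = N \<and> run_lengths bs = ls} \<union>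
      Cons True ` {bs. length bs = N \<and> run_lengths (True # bs) = ls}"
  proof (cases bs)
    case (Cons b bs')
    then show ?thesis using \<open>bs \<in> _\<close> by (cases b) auto
  qed simp
qed auto

lemma lists_starting_with_run:
  assumes "0 < l" "l \<le> N"
  shows "{bs. length bs = N \<and> run_lengths (True # bs) = l # ls} =
    (\<lambda>rest. replicate (l - 1) True @ False # rest) ` lists_with_runs (N - l) ls"
proof (intro equalityI subsetI)
  fix bs assume "bs \<in> {bs. length bs = N \<and> run_lengths (True # bs) = l # ls}"
  then have bs: "length bs = N" "leading_trues bs = l - 1" "run_lengths (drop (l - 1) bs) = ls"
    using assms by auto
  then have "drop (l - 1) bs = False # drop l bs"
    using drop_leading_trues[of bs] assms by auto
  moreover have "bs = replicate (l - 1) True @ drop (l - 1) bs"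
    using leading_trues_split[of bs] bs(2) by simp
  ultimately show "bs \<in> (\<lambda>rest. replicate (l - 1) True @ False # rest) ` lists_with_runs (N - l) ls"
    using bs by (auto simp: lists_with_runs_def intro!: image_eqI[of _ _ "drop l bs"])
next
  fix bs assume "bs \<in> (\<lambda>rest. replicate (l - 1) True @ False # rest) ` lists_with_runs (N - l) ls"
  then show "bs \<in> {bs. length bs = N \<and> run_lengths (True # bs) = l # ls}"
    using assms by (auto simp: lists_with_runs_def leading_trues_replicate run_lengths_replicate)
qed

lemma lists_starting_with_full_run:
  "{bs. length bs = N \<and> run_lengths (True # bs) = Suc N # ls} =
    (if ls = [] then {replicate N True} else {})"
proof (intro equalityI subsetI)
  fix bs assume "bs \<in> {bs. length bs = N \<and> run_lengths (True # bs) = Suc N # ls}"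
  then have "length bs = N" "leading_trues bs = N" "run_lengths (drop N bs) = ls" by auto
  then show "bs \<in> (if ls = [] then {replicate N True} else {})"
    using leading_trues_split[of bs] by auto
next
  fix bs assume "bs \<in> (if ls = [] then {replicate N True} else {})"
  moreover have "run_lengths (True # replicate N True) = [Suc N]"
    using run_lengths_replicate(2)[of "Suc N"] by simp
  ultimately show "bs \<in> {bs. length bs = N \<and> run_lengths (True # bs) = Suc N # ls}"
    by (simp split: if_splits)
qed

lemma card_lists_starting_with_run:
  assumes "0 < l"
  shows "card {bs. length bs = N \<and> run_lengths (True # bs) = l # ls} =
    (if l \<le> Suc N then card (lists_with_runs (N - l) ls) else 0)"
proof -
  consider "l \<le> N" | "l = Suc N" | "Suc N < l" by linarith
  then show ?thesis
  proof cases
    case 1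
    have "inj (\<lambda>rest. replicate (l - 1) True @ False # rest)" by (auto intro: injI)
    then show ?thesis
      unfolding lists_starting_with_run[OF assms 1] using 1 by (simp add: card_image inj_on_subset)
  next
    case 2
    then show ?thesis unfolding 2 lists_starting_with_full_run by (simp add: lists_with_runs_0)
  next
    case 3
    have "bs \<notin> {bs. length bs = N \<and> run_lengths (True # bs) = l # ls}" for bs
      using leading_trues_le_length[of bs] 3 assms by auto
    then have "{bs. length bs = N \<and> run_lengths (True # bs) = l # ls} = {}" by blast
    then show ?thesis using 3 by (simp only: card.empty) simp
  qed
qed

lemma length_le_sum_list_pos: "\<forall>x\<in>set xs. 1 \<le> x \<Longrightarrow> length xs \<le> sum_list (xs :: nat list)"
  by (induction xs) auto

lemma choose_run_count_step:
  fixes N l s c :: nat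
  assumes "1 \<le> l" "c \<le> s" "c = 0 \<Longrightarrow> s = 0"
  shows "((Suc N - (l + s)) choose Suc c) + (if l \<le> Suc N then (Suc (N - l) - s) choose c else 0)
       = (Suc (Suc N) - (l + s)) choose Suc c"
proof -
  consider "l + s \<le> N" | "l + s = Suc N" | "Suc N < l + s" by linarith
  then show ?thesis
  proof cases
    case 1
    then have "Suc (Suc N) - (l + s) = Suc (Suc N - (l + s))" "Suc (N - l) - s = Suc N - (l + s)" by auto
    then show ?thesis using 1 by simp
  next
    case 2
    then show ?thesis using assms by (cases c) (auto simp: Suc_diff_le)
  qed (use assms in \<open>cases c; auto\<close>)
qed

lemma card_lists_with_runs:
  assumes "\<forall>x\<in>set ls. 1 \<le> x"
  shows "card (lists_with_runs N ls) = (Suc N - sum_list ls) choose length ls"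
  using assms
proof (induction N arbitrary: ls rule: less_induct)
  case (less N')
  show ?case
  proof (cases N')
    case 0
    have "ls \<noteq> [] \<Longrightarrow> 1 \<le> sum_list ls" using less.prems by (cases ls) auto
    then show ?thesis using 0 by (cases ls) (auto simp: lists_with_runs_0)
  next
    case (Suc N)
    have "finite {bs. length bs = N \<and> run_lengths (True # bs) = ls}"
      by (rule finite_subset[OF _ finite_lists_length_eq[of "UNIV :: bool set" N]]) auto
    then have "card (lists_with_runs N' ls) =
        card (lists_with_runs N ls) + card {bs. length bs = N \<and> run_lengths (True # bs) = ls}"
      unfolding Suc lists_with_runs_Suc using finite_lists_with_runs[of N ls]
      by (subst card_Un_disjoint) (auto simp: card_image)
    also have "card (lists_with_runs N ls) = (Suc N - sum_list ls) choose length ls"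
      using less Suc by simp
    finally have rec: "card (lists_with_runs N' ls) = ((Suc N - sum_list ls) choose length ls) +
        card {bs. length bs = N \<and> run_lengths (True # bs) = ls}" .
    show ?thesis
    proof (cases ls)
      case (Cons l ls')
      have pos: "1 \<le> l" "\<forall>x\<in>set ls'. 1 \<le> x" using less.prems Cons by auto
      have "card {bs. length bs = N \<and> run_lengths (True # bs) = ls} =
          (if l \<le> Suc N then (Suc (N - l) - sum_list ls') choose length ls' else 0)"
        using card_lists_starting_with_run[of l N ls'] less.IH[of "N - l" ls'] pos Cons Suc by simp
      moreover have "length ls' \<le> sum_list ls'" using length_le_sum_list_pos[OF pos(2)] .
      ultimately show ?thesis
        using rec Cons Suc choose_run_count_step[OF pos(1), of "length ls'" "sum_list ls'" N] by simp
    qed (use rec Suc in simp)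
  qed
qed

section \<open>Regrouping finite sums\<close>

lemma sum_list_concat: "sum_list (concat xss) = sum_list (map sum_list (xss :: 'a::monoid_add list list))"
  by (induction xss) auto

lemma sum_atLeastAtMost_conv_sum_list: "(\<Sum>k=1..d. f k) = sum_list (map f [1..<d+1])"
  by (metis sum_set_upt_conv_sum_list_nat atLeastLessThanSuc_atLeastAtMost set_upt Suc_eq_plus1)

lemma sum_restrict_sum_list:
  "(\<Sum>k=1..d. (\<lambda>k\<in>{1..d}. sum_list (ls k)) k) = sum_list (concat (map ls [1..<d+1]))"
proof -
  have "(\<Sum>k=1..d. (\<lambda>k\<in>{1..d}. sum_list (ls k)) k) = (\<Sum>k=1..d. sum_list (ls k))"
    by (rule sum.cong) auto
  also have "\<dots> = sum_list (concat (map ls [1..<d+1]))"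
    unfolding sum_atLeastAtMost_conv_sum_list sum_list_concat by (simp only: map_map o_def)
  finally show ?thesis .
qed

lemma sum_restrict_length:
  "(\<Sum>k=1..d. (\<lambda>k\<in>{1..d}. length (ls k)) k) = length (concat (map ls [1..<d+1]))"
proof -
  have "(\<Sum>k=1..d. (\<lambda>k\<in>{1..d}. length (ls k)) k) = (\<Sum>k=1..d. length (ls k))"
    by (rule sum.cong) auto
  also have "\<dots> = length (concat (map ls [1..<d+1]))"
    unfolding sum_atLeastAtMost_conv_sum_list length_concat by (simp only: map_map o_def)
  finally show ?thesis .
qed

lemma distinct_concat_map_Pair:
  "distinct ks \<Longrightarrow> (\<And>k. distinct (xs k)) \<Longrightarrow> distinct (concat (map (\<lambda>k. map (Pair k) (xs k)) ks))"
  by (induction ks) (auto simp: distinct_map inj_on_def)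

lemma sum_list_conv_sum_1_based: "sum_list xs = (\<Sum>i\<in>{1..length xs}. xs ! (i - 1))"
proof -
  have "sum_list xs = (\<Sum>i<length xs. xs ! i)" by (simp add: sum_list_sum_nth atLeast0LessThan)
  also have "\<dots> = (\<Sum>i\<in>{1..length xs}. xs ! (i - 1))"
    by (rule sum.reindex_bij_witness[of _ "\<lambda>i. i - 1" Suc]) auto
  finally show ?thesis .
qed

lemma PiE_fibre:
  assumes "t \<in> PiE K T"
  shows "{b \<in> PiE K A. (\<lambda>k\<in>K. f k (b k)) = t} = PiE K (\<lambda>k. {a \<in> A k. f k a = t k})"
proof (intro equalityI subsetI)
  fix b assume "b \<in> {b \<in> PiE K A. (\<lambda>k\<in>K. f k (b k)) = t}"
  then show "b \<in> PiE K (\<lambda>k. {a \<in> A k. f k a = t k})" by (auto simp: PiE_iff)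
next
  fix b assume b: "b \<in> PiE K (\<lambda>k. {a \<in> A k. f k a = t k})"
  then have "(\<lambda>k\<in>K. f k (b k)) = t" using assms by (auto simp: PiE_iff extensional_def fun_eq_iff)
  then show "b \<in> {b \<in> PiE K A. (\<lambda>k\<in>K. f k (b k)) = t}" using b by (auto simp: PiE_iff)
qed

lemma sum_PiE_group_by:
  fixes h :: "('k \<Rightarrow> 'b) \<Rightarrow> 'c::comm_semiring_1"
  assumes K: "finite K" and A: "\<And>k. k \<in> K \<Longrightarrow> finite (A k)" and T: "\<And>k. k \<in> K \<Longrightarrow> finite (T k)"
    and fT: "\<And>k a. k \<in> K \<Longrightarrow> a \<in> A k \<Longrightarrow> f k a \<in> T k"
  shows "(\<Sum>b\<in>PiE K A. h (\<lambda>k\<in>K. f k (b k))) =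
         (\<Sum>t\<in>PiE K T. of_nat (\<Prod>k\<in>K. card {a \<in> A k. f k a = t k}) * h t)"
proof -
  let ?F = "\<lambda>b. \<lambda>k\<in>K. f k (b k)"
  have "(\<Sum>b\<in>PiE K A. h (?F b)) = (\<Sum>t\<in>PiE K T. \<Sum>b\<in>{b \<in> PiE K A. ?F b = t}. h (?F b))"
    using K A T fT by (intro sum.group[symmetric]) (auto intro!: finite_PiE simp: PiE_iff)
  also have "\<dots> = (\<Sum>t\<in>PiE K T. of_nat (card {b \<in> PiE K A. ?F b = t}) * h t)"
    by (intro sum.cong refl) simp
  also have "\<dots> = (\<Sum>t\<in>PiE K T. of_nat (\<Prod>k\<in>K. card {a \<in> A k. f k a = t k}) * h t)"
    by (intro sum.cong refl) (simp add: PiE_fibre card_PiE[OF K])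
  finally show ?thesis .
qed

definition bounded_compositions :: "nat \<Rightarrow> nat list set" where
  "bounded_compositions M = {ls. (\<forall>x\<in>set ls. 1 \<le> x) \<and> sum_list ls < M}"

lemma finite_compositions: "finite (compositions r c)"
proof -
  have "compositions r c \<subseteq> {ls. set ls \<subseteq> {0..r} \<and> length ls = c}"
    unfolding compositions_def by (auto simp: member_le_sum_list)
  then show ?thesis by (rule finite_subset) (rule finite_lists_length_eq, simp)
qed

lemma finite_bounded_compositions: "finite (bounded_compositions M)"
proof -
  have "bounded_compositions M \<subseteq> {xs. set xs \<subseteq> {0..M} \<and> length xs \<le> M}"
    using length_le_sum_list_pos member_le_sum_list
    by (fastforce simp: bounded_compositions_def)
  then show ?thesis by (rule finite_subset) (rule finite_lists_length_le, simp)
qed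

lemma sum_compositions_regroup:
  fixes F :: "('k \<Rightarrow> nat) \<Rightarrow> ('k \<Rightarrow> nat) \<Rightarrow> ('k \<Rightarrow> nat list) \<Rightarrow> 'a::comm_monoid_add"
  assumes K: "finite K"
  shows "(\<Sum>r \<in> PiE K (\<lambda>k. {0..<M k}). \<Sum>c \<in> PiE K (\<lambda>k. {0..r k}).
            \<Sum>ls \<in> PiE K (\<lambda>k. compositions (r k) (c k)). F r c ls)
       = (\<Sum>ls \<in> PiE K (\<lambda>k. bounded_compositions (M k)).
            F (\<lambda>k\<in>K. sum_list (ls k)) (\<lambda>k\<in>K. length (ls k)) ls)"
proof -
  let ?C = "\<lambda>r. PiE K (\<lambda>k. {0..r k})"
  let ?L = "\<lambda>r c. PiE K (\<lambda>k. compositions (r k) (c k))"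
  let ?S = "Sigma (PiE K (\<lambda>k. {0..<M k})) (\<lambda>r. Sigma (?C r) (?L r))"
  have fin: "finite (?C r)" "finite (?L r c)" for r c
    using K by (auto intro!: finite_PiE finite_compositions)
  have "(\<Sum>r \<in> PiE K (\<lambda>k. {0..<M k}). \<Sum>c \<in> ?C r. \<Sum>ls \<in> ?L r c. F r c ls)
      = (\<Sum>(r, c, ls) \<in> ?S. F r c ls)"
    using K fin by (simp add: sum.Sigma finite_PiE split_def)
  also have "\<dots> = (\<Sum>ls \<in> PiE K (\<lambda>k. bounded_compositions (M k)).
                    F (\<lambda>k\<in>K. sum_list (ls k)) (\<lambda>k\<in>K. length (ls k)) ls)"
  proof (rule sum.reindex_bij_witness[where i = "\<lambda>ls. (\<lambda>k\<in>K. sum_list (ls k), \<lambda>k\<in>K. length (ls k), ls)"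
        and j = "\<lambda>(r, c, ls). ls"])
    fix a assume "a \<in> ?S"
    moreover obtain r c ls where "a = (r, c, ls)" by (cases a)
    ultimately have "(\<lambda>k\<in>K. sum_list (ls k), \<lambda>k\<in>K. length (ls k), ls) = a"
      by (auto simp: PiE_iff compositions_def extensional_def fun_eq_iff)
    then show "(\<lambda>k\<in>K. sum_list ((case a of (r, c, ls) \<Rightarrow> ls) k),
        \<lambda>k\<in>K. length ((case a of (r, c, ls) \<Rightarrow> ls) k), case a of (r, c, ls) \<Rightarrow> ls) = a"
      and "F (\<lambda>k\<in>K. sum_list ((case a of (r, c, ls) \<Rightarrow> ls) k))
        (\<lambda>k\<in>K. length ((case a of (r, c, ls) \<Rightarrow> ls) k)) (case a of (r, c, ls) \<Rightarrow> ls) =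
        (case a of (r, c, ls) \<Rightarrow> F r c ls)"
      using \<open>a = (r, c, ls)\<close> by auto
  next
    fix ls assume ls: "ls \<in> PiE K (\<lambda>k. bounded_compositions (M k))"
    then have "length (ls k) \<le> sum_list (ls k)" if "k \<in> K" for k
      using that length_le_sum_list_pos by (auto simp: PiE_iff bounded_compositions_def)
    then show "(\<lambda>k\<in>K. sum_list (ls k), \<lambda>k\<in>K. length (ls k), ls) \<in> ?S"
      using ls by (auto simp: PiE_iff bounded_compositions_def compositions_def)
  qed (auto simp: PiE_iff compositions_def bounded_compositions_def)
  finally show ?thesis .
qed

lemma bij_betw_assignments_partitions:
  "bij_betw (\<lambda>a. \<lambda>k\<in>K. {i \<in> I. a i = k}) (PiE I (\<lambda>_. K))
     {J \<in> PiE K (\<lambda>k. Pow I). (\<forall>k\<in>K. \<forall>k'\<in>K. k \<noteq> k' \<longrightarrow> J k \<inter> J k' = {}) \<and> (\<Union>k\<in>K. J k) = I}"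
  (is "bij_betw ?part _ ?P")
proof (rule bij_betw_byWitness[where f' = "\<lambda>J. \<lambda>i\<in>I. THE k. k \<in> K \<and> i \<in> J k"])
  have the_block: "(THE k. k \<in> K \<and> i \<in> J k) = k" if "J \<in> ?P" "k \<in> K" "i \<in> J k" for J i k
    using that by (intro the_equality) blast+
  have covered: "\<exists>k\<in>K. i \<in> J k" if "J \<in> ?P" "i \<in> I" for J i
    using that by blast
  have part: "?part a \<in> ?P" if "a \<in> PiE I (\<lambda>_. K)" for a
    using that by (force simp: PiE_iff)
  show "\<forall>a\<in>PiE I (\<lambda>_. K). (\<lambda>i\<in>I. THE k. k \<in> K \<and> i \<in> ?part a k) = a"
  proof
    fix a assume a: "a \<in> PiE I (\<lambda>_. K)"
    have "(THE k. k \<in> K \<and> i \<in> ?part a k) = a i" if "i \<in> I" for i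
      using the_block[OF part[OF a]] a that by (simp add: PiE_iff)
    then show "(\<lambda>i\<in>I. THE k. k \<in> K \<and> i \<in> ?part a k) = a"
      using a by (simp add: PiE_iff extensional_def fun_eq_iff)
  qed
  show "\<forall>J\<in>?P. ?part (\<lambda>i\<in>I. THE k. k \<in> K \<and> i \<in> J k) = J"
  proof
    fix J assume J: "J \<in> ?P"
    have eq: "{i \<in> I. (THE k. k \<in> K \<and> i \<in> J k) = k} = J k" if "k \<in> K" for k
    proof (intro equalityI subsetI)
      fix i assume "i \<in> {i \<in> I. (THE k. k \<in> K \<and> i \<in> J k) = k}"
      then show "i \<in> J k" using covered[OF J] the_block[OF J] by blast
    next
      fix i assume "i \<in> J k"
      then show "i \<in> {i \<in> I. (THE k. k \<in> K \<and> i \<in> J k) = k}"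
        using J that the_block[OF J that] by blast
    qed
    show "?part (\<lambda>i\<in>I. THE k. k \<in> K \<and> i \<in> J k) = J"
    proof
      fix k
      have "{i \<in> I. (\<lambda>i\<in>I. THE k. k \<in> K \<and> i \<in> J k) i = k} = {i \<in> I. (THE k. k \<in> K \<and> i \<in> J k) = k}"
        by auto
      then show "?part (\<lambda>i\<in>I. THE k. k \<in> K \<and> i \<in> J k) k = J k"
        using eq J by (cases "k \<in> K") (auto simp: PiE_iff extensional_def)
    qed
  qed
  show "?part ` PiE I (\<lambda>_. K) \<subseteq> ?P" using part by blast
  show "(\<lambda>J. \<lambda>i\<in>I. THE k. k \<in> K \<and> i \<in> J k) ` ?P \<subseteq> PiE I (\<lambda>_. K)"
    using covered the_block by (force simp: PiE_iff)
qed

lemma q_nd_sum_assignments: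
  "q_nd n d L = (\<Sum>a\<in>PiE {1..length L} (\<lambda>_. {1..d}). \<Prod>k=1..d.
      ((nk n d k - (\<Sum>i\<in>{i \<in> {1..length L}. a i = k}. L ! (i - 1)))
        choose card {i \<in> {1..length L}. a i = k})
      * fact (card {i \<in> {1..length L}. a i = k}))"
proof -
  let ?I = "{1..length L}"
  let ?P = "{J \<in> PiE {1..d} (\<lambda>k. Pow ?I). (\<forall>k\<in>{1..d}. \<forall>k'\<in>{1..d}. k \<noteq> k' \<longrightarrow> J k \<inter> J k' = {})
      \<and> (\<Union>k\<in>{1..d}. J k) = ?I}"
  define W where
    "W J = (\<Prod>k=1..d. ((nk n d k - (\<Sum>i\<in>J k. L ! (i - 1))) choose card (J k)) * fact (card (J k)))"
    for J :: "nat \<Rightarrow> nat set"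
  have "q_nd n d L = sum W {J \<in> ?P. \<forall>k\<in>{1..d}. (\<Sum>i\<in>J k. L ! (i - 1)) \<le> nk n d k}"
    unfolding q_nd_def W_def by simp
  also have "\<dots> = sum W ?P"
    \<comment> \<open>the side condition of \<open>q_nd\<close> only removes terms that vanish anyway\<close>
  proof (rule sum.mono_neutral_left)
    show "finite ?P" by (rule finite_subset[of _ "PiE {1..d} (\<lambda>k. Pow ?I)"]) (blast, simp add: finite_PiE)
    show "\<forall>J\<in>?P - {J \<in> ?P. \<forall>k\<in>{1..d}. (\<Sum>i\<in>J k. L ! (i - 1)) \<le> nk n d k}. W J = 0"
    proof
      fix J assume "J \<in> ?P - {J \<in> ?P. \<forall>k\<in>{1..d}. (\<Sum>i\<in>J k. L ! (i - 1)) \<le> nk n d k}"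
      then have J: "J \<in> ?P" and bad: "\<not> (\<forall>k\<in>{1..d}. (\<Sum>i\<in>J k. L ! (i - 1)) \<le> nk n d k)" by blast+
      from bad obtain k where k: "k \<in> {1..d}" "nk n d k < (\<Sum>i\<in>J k. L ! (i - 1))" by (auto simp: not_le)
      then have "J k \<noteq> {}" by auto
      moreover have "J \<in> PiE {1..d} (\<lambda>k. Pow ?I)" using J by blast
      then have "J k \<in> Pow ?I" using k(1) by (rule PiE_mem)
      then have "finite (J k)" by (simp add: finite_subset)
      ultimately have "(nk n d k - (\<Sum>i\<in>J k. L ! (i - 1))) choose card (J k) = 0"
        using k by (simp add: card_gt_0_iff)
      then show "W J = 0" unfolding W_def using k(1) by (intro prod_zero bexI[of _ k]) simp_all
    qed
  qed blast
  also have "\<dots> = (\<Sum>a\<in>PiE ?I (\<lambda>_. {1..d}). W (\<lambda>k\<in>{1..d}. {i \<in> ?I. a i = k}))"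
    by (rule sum.reindex_bij_betw[OF bij_betw_assignments_partitions, symmetric])
  also have "\<dots> = (\<Sum>a\<in>PiE ?I (\<lambda>_. {1..d}). \<Prod>k=1..d.
      ((nk n d k - (\<Sum>i\<in>{i \<in> ?I. a i = k}. L ! (i - 1))) choose card {i \<in> ?I. a i = k})
      * fact (card {i \<in> ?I. a i = k}))"
    unfolding W_def by (intro sum.cong[OF refl] prod.cong[OF refl]) simp
  finally show ?thesis .
qed

section \<open>Residue chains\<close>

lemma less_div_iff_Suc_mult_le: "0 < (d::nat) \<Longrightarrow> j < x div d \<longleftrightarrow> Suc j * d \<le> x"
  by (simp add: less_eq_Suc_le less_eq_div_iff_mult_less_eq)

lemma eq_if_mod_eq: "k \<in> {1..d} \<Longrightarrow> k' \<in> {1..(d::nat)} \<Longrightarrow> k mod d = k' mod d \<Longrightarrow> k = k'"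
  by (metis atLeastAtMost_iff mod_less mod_self nat_less_le not_one_le_zero)

lemma injective_walk_arithmetic:
  fixes w :: "nat \<Rightarrow> nat" and \<delta> :: nat
  assumes step: "\<forall>t<l. \<bar>int (w (Suc t)) - int (w t)\<bar> = int \<delta>"
    and inj: "inj_on w {0..l}" and l: "1 \<le> l"
  obtains s where "\<bar>s\<bar> = int \<delta>" "\<And>t. t \<le> l \<Longrightarrow> int (w t) = int (w 0) + int t * s"
proof -
  define s where "s = int (w 1) - int (w 0)"
  have const: "int (w (Suc t)) - int (w t) = s" if "t < l" for t
    using that
  proof (induction t)
    case (Suc t)
    \<comment> \<open>two consecutive steps in opposite directions would revisit \<open>w t\<close>\<close>
    have "w (Suc (Suc t)) \<noteq> w t"
      using inj_onD[OF inj, of "Suc (Suc t)" t] Suc.prems by auto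
    then have "int (w (Suc (Suc t))) \<noteq> int (w t)" by simp
    moreover have "\<bar>int (w (Suc (Suc t))) - int (w (Suc t))\<bar> = int \<delta>"
      "\<bar>int (w (Suc t)) - int (w t)\<bar> = int \<delta>"
      using step Suc.prems by auto
    ultimately have "int (w (Suc (Suc t))) - int (w (Suc t)) = int (w (Suc t)) - int (w t)"
      by linarith
    then show ?case using Suc by simp
  qed (simp add: s_def)
  have "int (w t) = int (w 0) + int t * s" if "t \<le> l" for t
    using that
  proof (induction t)
    case (Suc t)
    then show ?case using const[of t] by (simp add: algebra_simps)
  qed simp
  moreover have "\<bar>s\<bar> = int \<delta>" using step l by (simp add: s_def)
  ultimately show ?thesis using that by blast
qed

locale residue_chains =
  fixes n d :: nat
  assumes d_pos: "1 \<le> d" and d_less_n: "d < n"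
begin

abbreviation chain_len :: "nat \<Rightarrow> nat" where "chain_len k \<equiv> nk n d k"

definition chain_pos :: "nat \<Rightarrow> nat \<Rightarrow> nat" where "chain_pos k j = k + j * d"

lemma residue_class_eq_chain:
  assumes k: "k \<in> {1..d}"
  shows "{i \<in> {1..n}. i mod d = k mod d} = chain_pos k ` {..< (n + d - k) div d}"
proof (intro equalityI subsetI)
  fix i assume "i \<in> {i \<in> {1..n}. i mod d = k mod d}"
  then have i: "1 \<le> i" "i \<le> n" "i mod d = k mod d" by auto
  have ki: "k \<le> i"
  proof (rule ccontr)
    assume "\<not> k \<le> i"
    then have "i < d" "i < k" using k by auto
    then have "i mod d = i" by simp
    moreover have "k mod d = (if k = d then 0 else k)" using k by auto
    ultimately show False using i \<open>i < k\<close> by (auto split: if_splits)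
  qed
  have "(i - k) mod d = 0" using i ki by (simp add: mod_eq_dvd_iff_nat)
  then have e: "i = k + ((i - k) div d) * d" using ki div_mult_mod_eq[of "i - k" d] by simp
  have "(i - k) div d < (n + d - k) div d"
  proof -
    have "Suc ((i - k) div d) * d = (i - k) + d" using e ki by (simp add: algebra_simps)
    also have "\<dots> \<le> n + d - k" using i ki k by auto
    finally show ?thesis using d_pos by (simp add: less_div_iff_Suc_mult_le)
  qed
  then show "i \<in> chain_pos k ` {..< (n + d - k) div d}" using e unfolding chain_pos_def by blast
next
  fix i assume "i \<in> chain_pos k ` {..< (n + d - k) div d}"
  then obtain j where j: "j < (n + d - k) div d" "i = k + j * d" unfolding chain_pos_def by auto
  have "Suc j * d \<le> n + d - k" using j d_pos by (simp add: less_div_iff_Suc_mult_le)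
  then have "i \<le> n" using j k by (simp add: algebra_simps) arith
  moreover have "i mod d = k mod d" using j by simp
  moreover have "1 \<le> i" using j k by simp
  ultimately show "i \<in> {i \<in> {1..n}. i mod d = k mod d}" by simp
qed

lemma chain_pos_eq_iff: "k \<in> {1..d} \<Longrightarrow> k' \<in> {1..d} \<Longrightarrow> chain_pos k j = chain_pos k' j' \<longleftrightarrow> k = k' \<and> j = j'"
proof
  assume k: "k \<in> {1..d}" "k' \<in> {1..d}" and e: "chain_pos k j = chain_pos k' j'"
  have "(k + j * d) mod d = (k' + j' * d) mod d" using e chain_pos_def by simp
  then have "k mod d = k' mod d" by simp
  then have "k = k'" using k eq_if_mod_eq by blast
  then show "k = k' \<and> j = j'" using e d_pos unfolding chain_pos_def by simp
qed auto

lemma chain_pos_le_iff: "k \<in> {1..d} \<Longrightarrow> chain_pos k j \<le> n \<longleftrightarrow> j < chain_len k"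
proof -
  assume k: "k \<in> {1..d}"
  have inj: "inj_on (chain_pos k) UNIV" using chain_pos_eq_iff[OF k k] by (auto intro: inj_onI)
  have "chain_len k = (n + d - k) div d"
    unfolding nk_def residue_class_eq_chain[OF k] using inj by (simp add: card_image inj_on_subset)
  moreover have "j < (n + d - k) div d \<longleftrightarrow> Suc j * d \<le> n + d - k"
    using d_pos by (simp add: less_div_iff_Suc_mult_le)
  moreover have "Suc j * d \<le> n + d - k \<longleftrightarrow> chain_pos k j \<le> n"
    using k unfolding chain_pos_def by (auto simp: algebra_simps)
  ultimately show ?thesis by simp
qed

lemma chain_pos_pos: "k \<in> {1..d} \<Longrightarrow> 1 \<le> chain_pos k j" unfolding chain_pos_def by simp

lemma chain_pos_mem_iff: "k \<in> {1..d} \<Longrightarrow> chain_pos k j \<in> {1..n} \<longleftrightarrow> j < chain_len k"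
  using chain_pos_le_iff chain_pos_pos by auto

lemma chain_len_pos: "k \<in> {1..d} \<Longrightarrow> 1 \<le> chain_len k"
  using chain_pos_mem_iff[of k 0] d_less_n unfolding chain_pos_def by auto

lemma chain_pos_surj: "u \<in> {1..n} \<Longrightarrow> \<exists>k j. k \<in> {1..d} \<and> j < chain_len k \<and> u = chain_pos k j"
proof -
  assume u: "u \<in> {1..n}"
  define k where "k = (u - 1) mod d + 1"
  define j where "j = (u - 1) div d"
  have k: "k \<in> {1..d}" using d_pos unfolding k_def by (simp add: Suc_leI)
  have e: "u = chain_pos k j" unfolding chain_pos_def k_def j_def using u by (simp add: algebra_simps)
  then show ?thesis using k u chain_pos_mem_iff by blast
qed

lemma chain_pos_Suc: "chain_pos k (Suc j) = chain_pos k j + d" unfolding chain_pos_def by simp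

lemma chain_pos_dist_iff: "k \<in> {1..d} \<Longrightarrow> k' \<in> {1..d} \<Longrightarrow>
  \<bar>int (chain_pos k j) - int (chain_pos k' j')\<bar> = int d \<longleftrightarrow> k = k' \<and> (j' = Suc j \<or> j = Suc j')"
proof
  assume k: "k \<in> {1..d}" "k' \<in> {1..d}" and a: "\<bar>int (chain_pos k j) - int (chain_pos k' j')\<bar> = int d"
  then have "chain_pos k j = chain_pos k' j' + d \<or> chain_pos k' j' = chain_pos k j + d" by auto
  then show "k = k' \<and> (j' = Suc j \<or> j = Suc j')"
  proof
    assume "chain_pos k j = chain_pos k' j' + d"
    then have "chain_pos k j = chain_pos k' (Suc j')" by (simp add: chain_pos_Suc)
    then show ?thesis using chain_pos_eq_iff[OF k] by simp
  next
    assume "chain_pos k' j' = chain_pos k j + d"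
    then have "chain_pos k' j' = chain_pos k (Suc j)" by (simp add: chain_pos_Suc)
    then show ?thesis using chain_pos_eq_iff[OF k(2) k(1)] by simp
  qed
next
  assume "k = k' \<and> (j' = Suc j \<or> j = Suc j')"
  then show "\<bar>int (chain_pos k j) - int (chain_pos k' j')\<bar> = int d" by (auto simp: chain_pos_Suc)
qed

text \<open>
  A block of \<open>l\<close> steps has \<open>l + 1\<close> elements \<open>t = 0, \<dots>, l\<close>; a target \<open>(up, k', y)\<close> lays
  them onto positions \<open>y, \<dots>, y + l\<close> of chain \<open>k'\<close>, in increasing order iff \<open>up\<close>.
\<close>

definition block_image :: "bool \<times> nat \<times> nat \<Rightarrow> nat \<Rightarrow> nat \<Rightarrow> nat" where
  "block_image q l t = (case q of (up, k', y) \<Rightarrow> chain_pos k' (if up then y + t else y + l - t))"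

definition block_targets :: "nat \<Rightarrow> (bool \<times> nat \<times> nat) set" where
  "block_targets l = UNIV \<times> Sigma {1..d} (\<lambda>k'. {y. y + l < chain_len k'})"

lemma block_image_determines_target:
  assumes l: "1 \<le> l" and q: "q \<in> block_targets l" "q' \<in> block_targets l"
    and e: "\<forall>t\<le>l. block_image q l t = block_image q' l t"
  shows "q = q'"
proof -
  obtain up k y up' k' y' where qq: "q = (up, k, y)" "q' = (up', k', y')" by (cases q, cases q') auto
  have k: "k \<in> {1..d}" "k' \<in> {1..d}" using q qq block_targets_def by auto
  have e0: "block_image q l 0 = block_image q' l 0" and e1: "block_image q l 1 = block_image q' l 1"
    using e l by auto
  from e0 have "k = k'" using chain_pos_eq_iff[OF k] qq by (simp add: block_image_def)
  show ?thesis
    using e0 e1 chain_pos_eq_iff[OF k] qq l by (cases up; cases up') (auto simp: block_image_def)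
qed

lemma block_image_range:
  assumes "q = (up, k', y)" "t \<le> l"
  shows "block_image q l t = chain_pos k' (if up then y + t else y + l - t)"
    "(if up then y + t else y + l - t) \<in> {y..y+l}"
  using assms by (auto simp: block_image_def)

lemma block_image_onto:
  assumes "q = (up, k', y)" "z \<in> {y..y+l}"
  shows "\<exists>t\<le>l. block_image q l t = chain_pos k' z"
proof (cases up)
  case True
  then show ?thesis using assms by (intro exI[of _ "z - y"]) (auto simp: block_image_def)
next
  case False
  then show ?thesis using assms by (intro exI[of _ "y + l - z"]) (auto simp: block_image_def)
qed

lemma block_image_inj:
  assumes "q \<in> block_targets l" "t \<le> l" "t' \<le> l" "block_image q l t = block_image q l t'"
  shows "t = t'"
proof -
  obtain up k y where qq: "q = (up, k, y)" by (cases q) auto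
  have k: "k \<in> {1..d}" using assms qq block_targets_def by auto
  have "chain_pos k (if up then y + t else y + l - t) =
      chain_pos k (if up then y + t' else y + l - t')"
    using assms(4) qq by (simp add: block_image_def)
  then have "(if up then y + t else y + l - t) = (if up then y + t' else y + l - t')"
    using chain_pos_eq_iff[OF k k] by blast
  then show ?thesis using assms(2,3) by (cases up) auto
qed

lemma block_image_mem: "q \<in> block_targets l \<Longrightarrow> t \<le> l \<Longrightarrow> block_image q l t \<in> {1..n}"
proof -
  assume q: "q \<in> block_targets l" "t \<le> l"
  obtain up k y where qq: "q = (up, k, y)" by (cases q) auto
  have k: "k \<in> {1..d}" "y + l < chain_len k" using q qq block_targets_def by auto
  have "(if up then y + t else y + l - t) < chain_len k" using k q by auto
  then have "chain_pos k (if up then y + t else y + l - t) \<in> {1..n}"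
    using chain_pos_mem_iff[OF k(1)] by blast
  then show ?thesis using qq by (simp add: block_image_def)
qed

lemma block_image_adjacent:
  assumes q: "q \<in> block_targets l" and t: "t < l"
  shows "\<bar>int (block_image q l (Suc t)) - int (block_image q l t)\<bar> = int d"
proof -
  obtain up k y where qq: "q = (up, k, y)" by (cases q) auto
  have k: "k \<in> {1..d}" using q qq block_targets_def by auto
  show ?thesis
  proof (cases up)
    case True
    then show ?thesis using qq chain_pos_dist_iff[OF k k] by (simp add: block_image_def)
  next
    case False
    have "y + l - t = Suc (y + l - Suc t)" using t by simp
    then show ?thesis using qq chain_pos_dist_iff[OF k k, of "y + l - t" "y + l - Suc t"] False
      by (simp add: block_image_def)
  qed
qed

lemma ascending_walk_in_chain:
  assumes lin: "\<And>t. t \<le> l \<Longrightarrow> int (w t) = int (w 0) + int t * int d"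
    and mem: "\<And>t. t \<le> l \<Longrightarrow> w t \<in> {1..n}"
  obtains k y where "k \<in> {1..d}" "y + l < chain_len k" "\<And>t. t \<le> l \<Longrightarrow> w t = chain_pos k (y + t)"
proof -
  obtain k y where k: "k \<in> {1..d}" and w0: "w 0 = chain_pos k y"
    using chain_pos_surj[OF mem[of 0]] by blast
  have w: "w t = chain_pos k (y + t)" if "t \<le> l" for t
    using lin[OF that] w0 by (simp add: chain_pos_def algebra_simps flip: of_nat_add of_nat_mult)
  then have "y + l < chain_len k" using mem[of l] chain_pos_mem_iff[OF k] by auto
  then show ?thesis using that k w by blast
qed

lemma walk_is_block_image:
  fixes w :: "nat \<Rightarrow> nat"
  assumes step: "\<forall>t<l. \<bar>int (w (Suc t)) - int (w t)\<bar> = int d"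
    and inj: "inj_on w {0..l}" and l: "1 \<le> l" and mem: "\<forall>t\<le>l. w t \<in> {1..n}"
  shows "\<exists>q\<in>block_targets l. \<forall>t\<le>l. w t = block_image q l t"
proof -
  obtain s where s: "\<bar>s\<bar> = int d" and lin: "\<And>t. t \<le> l \<Longrightarrow> int (w t) = int (w 0) + int t * s"
    using injective_walk_arithmetic[OF step inj l] by blast
  consider "s = int d" | "s = - int d" using s by linarith
  then show ?thesis
  proof cases
    case 1
    then obtain k y where "k \<in> {1..d}" "y + l < chain_len k" "\<And>t. t \<le> l \<Longrightarrow> w t = chain_pos k (y + t)"
      using ascending_walk_in_chain[of l w] lin mem by blast
    then show ?thesis by (intro bexI[of _ "(True, k, y)"]) (auto simp: block_image_def block_targets_def)
  next
    case 2
    have "int (w (l - t)) = int (w (l - 0)) + int t * int d" if "t \<le> l" for t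
      using lin[of "l - t"] lin[of l] that 2 by (simp add: of_nat_diff algebra_simps)
    then obtain k y where "k \<in> {1..d}" "y + l < chain_len k"
      and w: "\<And>t. t \<le> l \<Longrightarrow> w (l - t) = chain_pos k (y + t)"
      using ascending_walk_in_chain[of l "\<lambda>t. w (l - t)"] mem by auto
    have "w t = chain_pos k (y + l - t)" if "t \<le> l" for t
      using w[of "l - t"] that by simp
    then show ?thesis
      using \<open>k \<in> {1..d}\<close> \<open>y + l < chain_len k\<close>
      by (intro bexI[of _ "(False, k, y)"]) (auto simp: block_image_def block_targets_def)
  qed
qed

end

section \<open>Permutations respecting a family of blocks\<close>

text \<open>
  Block \<open>i\<close> consists of the \<open>Ln i + 1\<close> positions \<open>X i, \<dots>, X i + Ln i\<close> of chain \<open>K i\<close>,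
  that is, of \<open>Ln i\<close> consecutive constraints.
\<close>

locale block_family = residue_chains +
  fixes I :: "'i set" and K X Ln :: "'i \<Rightarrow> nat"
  assumes finite_I: "finite I"
    and block_chain: "i \<in> I \<Longrightarrow> K i \<in> {1..d}"
    and block_len_pos: "i \<in> I \<Longrightarrow> 1 \<le> Ln i"
    and block_fits: "i \<in> I \<Longrightarrow> X i + Ln i < chain_len (K i)"
    and blocks_disjoint:
      "\<lbrakk>i \<in> I; j \<in> I; i \<noteq> j; K i = K j\<rbrakk> \<Longrightarrow> {X i..X i + Ln i} \<inter> {X j..X j + Ln j} = {}"
begin

definition block_edges :: "nat set" where
  "block_edges = {chain_pos (K i) j | i j. i \<in> I \<and> X i \<le> j \<and> j < X i + Ln i}"

definition respects_blocks :: "(nat \<Rightarrow> nat) \<Rightarrow> bool" where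
  "respects_blocks \<pi> \<longleftrightarrow> (\<forall>e\<in>block_edges. \<bar>int (\<pi> (e + d)) - int (\<pi> e)\<bar> = int d)"

definition placements :: "('i \<Rightarrow> bool \<times> nat \<times> nat) set" where
  "placements = PiE I (\<lambda>i. block_targets (Ln i))"

definition placement_graph :: "('i \<Rightarrow> bool \<times> nat \<times> nat) \<Rightarrow> (nat \<times> nat) set" where
  "placement_graph p =
     (\<lambda>(i, t). (chain_pos (K i) (X i + t), block_image (p i) (Ln i) t)) ` Sigma I (\<lambda>i. {0..Ln i})"

definition perms_following :: "('i \<Rightarrow> bool \<times> nat \<times> nat) \<Rightarrow> (nat \<Rightarrow> nat) set" where
  "perms_following p = {\<pi>. \<pi> permutes {1..n} \<and> (\<forall>(a, b)\<in>placement_graph p. \<pi> a = b)}"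

definition non_overlapping :: "('i \<Rightarrow> nat \<times> nat) \<Rightarrow> bool" where
  "non_overlapping q \<longleftrightarrow> (\<forall>i\<in>I. \<forall>j\<in>I. i \<noteq> j \<longrightarrow> fst (q i) = fst (q j) \<longrightarrow>
     {snd (q i)..snd (q i) + Ln i} \<inter> {snd (q j)..snd (q j) + Ln j} = {})"

lemma block_pos_inj:
  assumes ij: "i \<in> I" "j \<in> I" and t: "t \<le> Ln i" "t' \<le> Ln j"
    and e: "chain_pos (K i) (X i + t) = chain_pos (K j) (X j + t')"
  shows "i = j \<and> t = t'"
proof -
  have KK: "K i = K j" and XX: "X i + t = X j + t'"
    using chain_pos_eq_iff[OF block_chain[OF ij(1)] block_chain[OF ij(2)]] e by auto
  have "i = j"
  proof (rule ccontr)
    assume "i \<noteq> j"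
    then have "{X i..X i + Ln i} \<inter> {X j..X j + Ln j} = {}" using blocks_disjoint ij KK by blast
    moreover have "X i + t \<in> {X i..X i + Ln i} \<inter> {X j..X j + Ln j}" using XX t by auto
    ultimately show False by blast
  qed
  then show ?thesis using XX by simp
qed

lemma block_pos_mem: "i \<in> I \<Longrightarrow> t \<le> Ln i \<Longrightarrow> chain_pos (K i) (X i + t) \<in> {1..n}"
  using block_fits block_chain chain_pos_mem_iff by fastforce

lemma finite_placements: "finite placements"
  unfolding placements_def block_targets_def
  by (intro finite_PiE finite_I finite_cartesian_product finite_SigmaI) (auto intro: finite_add_less)

lemma placement_graphD:
  "p \<in> perms_following q \<Longrightarrow> i \<in> I \<Longrightarrow> t \<le> Ln i \<Longrightarrow> p (chain_pos (K i) (X i + t)) = block_image (q i) (Ln i) t"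
  unfolding perms_following_def placement_graph_def by fastforce

lemma respecting_perm_follows_block:
  assumes \<pi>: "\<pi> permutes {1..n}" "respects_blocks \<pi>" and i: "i \<in> I"
  shows "\<exists>q\<in>block_targets (Ln i). \<forall>t\<le>Ln i. \<pi> (chain_pos (K i) (X i + t)) = block_image q (Ln i) t"
proof -
  define w where "w t = \<pi> (chain_pos (K i) (X i + t))" for t
  have "\<bar>int (w (Suc t)) - int (w t)\<bar> = int d" if t: "t < Ln i" for t
  proof -
    have "chain_pos (K i) (X i + t) \<in> block_edges" unfolding block_edges_def using i t by force
    then show ?thesis using \<pi>(2) by (simp add: respects_blocks_def w_def chain_pos_Suc)
  qed
  moreover have "inj_on w {0..Ln i}"
  proof (rule inj_onI)
    fix t t' assume "t \<in> {0..Ln i}" "t' \<in> {0..Ln i}" "w t = w t'"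
    then show "t = t'" using permutes_inj[OF \<pi>(1)] block_pos_inj[OF i i] by (auto simp: w_def dest: injD)
  qed
  moreover have "\<forall>t\<le>Ln i. w t \<in> {1..n}"
    unfolding w_def using block_pos_mem[OF i] permutes_in_image[OF \<pi>(1)] by blast
  ultimately show ?thesis
    using walk_is_block_image[of "Ln i" w] block_len_pos[OF i] unfolding w_def by blast
qed

lemma following_perm_respects_blocks:
  assumes p: "p \<in> placements" and \<pi>: "\<pi> \<in> perms_following p"
  shows "respects_blocks \<pi>"
  unfolding respects_blocks_def
proof
  fix e assume "e \<in> block_edges"
  then obtain i j where i: "i \<in> I" and j: "X i \<le> j" "j < X i + Ln i" and "e = chain_pos (K i) j"
    unfolding block_edges_def by blast
  moreover define t where "t = j - X i"
  ultimately have t: "t < Ln i" and e: "e = chain_pos (K i) (X i + t)" by auto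
  have "\<pi> (e + d) = block_image (p i) (Ln i) (Suc t)"
    using placement_graphD[OF \<pi> i, of "Suc t"] t e by (simp add: chain_pos_Suc)
  moreover have "\<pi> e = block_image (p i) (Ln i) t"
    using placement_graphD[OF \<pi> i, of t] t e by simp
  moreover have "p i \<in> block_targets (Ln i)" using p i unfolding placements_def by auto
  ultimately show "\<bar>int (\<pi> (e + d)) - int (\<pi> e)\<bar> = int d"
    using block_image_adjacent t by simp
qed

lemma respecting_perms_eq_Union:
  "{\<pi>. \<pi> permutes {1..n} \<and> respects_blocks \<pi>} = (\<Union>p\<in>placements. perms_following p)"
proof (intro equalityI subsetI)
  fix \<pi> assume "\<pi> \<in> {\<pi>. \<pi> permutes {1..n} \<and> respects_blocks \<pi>}"
  then have \<pi>: "\<pi> permutes {1..n}" "respects_blocks \<pi>" by auto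
  have "\<forall>i\<in>I. \<exists>q. q \<in> block_targets (Ln i) \<and>
      (\<forall>t\<le>Ln i. \<pi> (chain_pos (K i) (X i + t)) = block_image q (Ln i) t)"
    using respecting_perm_follows_block[OF \<pi>] by blast
  then obtain q where q: "\<forall>i\<in>I. q i \<in> block_targets (Ln i) \<and>
      (\<forall>t\<le>Ln i. \<pi> (chain_pos (K i) (X i + t)) = block_image (q i) (Ln i) t)"
    by (rule bchoice[THEN exE])
  have "restrict q I \<in> placements" using q unfolding placements_def by auto
  moreover have "\<pi> \<in> perms_following (restrict q I)"
    using \<pi>(1) q unfolding perms_following_def placement_graph_def by auto
  ultimately show "\<pi> \<in> (\<Union>p\<in>placements. perms_following p)" by blast
next
  fix \<pi> assume "\<pi> \<in> (\<Union>p\<in>placements. perms_following p)"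
  then show "\<pi> \<in> {\<pi>. \<pi> permutes {1..n} \<and> respects_blocks \<pi>}"
    using following_perm_respects_blocks by (auto simp: perms_following_def)
qed

lemma perms_following_disjoint:
  assumes p: "p \<in> placements" "p' \<in> placements" "p \<noteq> p'"
  shows "perms_following p \<inter> perms_following p' = {}"
proof (rule ccontr)
  assume "perms_following p \<inter> perms_following p' \<noteq> {}"
  then obtain \<pi> where \<pi>: "\<pi> \<in> perms_following p" "\<pi> \<in> perms_following p'" by blast
  have "p i = p' i" if i: "i \<in> I" for i
  proof (rule block_image_determines_target)
    show "1 \<le> Ln i" using block_len_pos[OF i] .
    show "p i \<in> block_targets (Ln i)" "p' i \<in> block_targets (Ln i)"
      using p i unfolding placements_def by auto
    show "\<forall>t\<le>Ln i. block_image (p i) (Ln i) t = block_image (p' i) (Ln i) t"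
      using placement_graphD[OF \<pi>(1) i] placement_graphD[OF \<pi>(2) i] by simp
  qed
  then have "p = p'" using p(1,2) unfolding placements_def by (metis PiE_ext)
  then show False using p by simp
qed

lemma placement_graph_subset:
  assumes "p \<in> placements"
  shows "fst ` placement_graph p \<subseteq> {1..n}" "snd ` placement_graph p \<subseteq> {1..n}"
proof -
  have "p i \<in> block_targets (Ln i)" if "i \<in> I" for i using assms that unfolding placements_def by auto
  show "fst ` placement_graph p \<subseteq> {1..n}"
    using block_pos_mem by (auto simp: placement_graph_def)
  show "snd ` placement_graph p \<subseteq> {1..n}"
  proof
    fix b assume "b \<in> snd ` placement_graph p"
    then obtain i t where "i \<in> I" "t \<le> Ln i" "b = block_image (p i) (Ln i) t"
      by (auto simp: placement_graph_def)
    then show "b \<in> {1..n}" using block_image_mem \<open>\<And>i. i \<in> I \<Longrightarrow> p i \<in> _\<close> by blast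
  qed
qed

lemma inj_on_fst_placement_graph: "inj_on fst (placement_graph p)"
  by (rule inj_onI) (auto simp: placement_graph_def dest: block_pos_inj)

lemma card_placement_graph:
  assumes "p \<in> placements"
  shows "card (placement_graph p) = sum Ln I + card I"
proof -
  have "inj_on (\<lambda>(i, t). (chain_pos (K i) (X i + t), block_image (p i) (Ln i) t))
      (Sigma I (\<lambda>i. {0..Ln i}))"
    by (rule inj_onI) (auto dest: block_pos_inj)
  then have "card (placement_graph p) = card (Sigma I (\<lambda>i. {0..Ln i}))"
    unfolding placement_graph_def by (rule card_image)
  also have "\<dots> = sum Ln I + card I" using finite_I by (simp add: card_SigmaI sum_Suc)
  finally show ?thesis .
qed

lemma shared_image_imp_overlap:
  assumes p: "p \<in> placements" and ij: "i \<in> I" "j \<in> I" and t: "t \<le> Ln i" "t' \<le> Ln j"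
    and b: "block_image (p i) (Ln i) t = block_image (p j) (Ln j) t'"
  shows "fst (snd (p i)) = fst (snd (p j)) \<and>
    {snd (snd (p i))..snd (snd (p i)) + Ln i} \<inter> {snd (snd (p j))..snd (snd (p j)) + Ln j} \<noteq> {}"
proof -
  obtain up k y where q1: "p i = (up, k, y)" by (cases "p i")
  obtain up' k' y' where q2: "p j = (up', k', y')" by (cases "p j")
  have k: "k \<in> {1..d}" "k' \<in> {1..d}"
    using p ij q1 q2 unfolding placements_def block_targets_def by (auto simp: PiE_iff)
  then show ?thesis
    using b block_image_range[OF q1 t(1)] block_image_range[OF q2 t(2)] chain_pos_eq_iff[OF k] q1 q2
    by auto
qed

lemma inj_on_snd_placement_graph:
  assumes p: "p \<in> placements" and no: "non_overlapping (snd \<circ> p)"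
  shows "inj_on snd (placement_graph p)"
proof (rule inj_onI)
  fix g g' assume "g \<in> placement_graph p" "g' \<in> placement_graph p" and b: "snd g = snd g'"
  then obtain i t j t' where
    it: "i \<in> I" "t \<le> Ln i" "g = (chain_pos (K i) (X i + t), block_image (p i) (Ln i) t)"
    and jt: "j \<in> I" "t' \<le> Ln j" "g' = (chain_pos (K j) (X j + t'), block_image (p j) (Ln j) t')"
    unfolding placement_graph_def by auto
  have "i = j"
    using shared_image_imp_overlap[OF p it(1) jt(1) it(2) jt(2)] b it jt no
    unfolding non_overlapping_def by auto
  moreover have "p i \<in> block_targets (Ln i)" using p it(1) unfolding placements_def by auto
  ultimately have "t = t'" using block_image_inj it jt b by auto
  then show "g = g'" using \<open>i = j\<close> it jt by simp
qed

lemma overlapping_imp_no_following_perm: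
  assumes p: "p \<in> placements" and ov: "\<not> non_overlapping (snd \<circ> p)"
  shows "perms_following p = {}"
proof -
  obtain i j where ij: "i \<in> I" "j \<in> I" "i \<noteq> j" "fst (snd (p i)) = fst (snd (p j))"
    and "{snd (snd (p i))..snd (snd (p i)) + Ln i} \<inter> {snd (snd (p j))..snd (snd (p j)) + Ln j} \<noteq> {}"
    using ov unfolding non_overlapping_def by auto
  then obtain z where
    z: "z \<in> {snd (snd (p i))..snd (snd (p i)) + Ln i}" "z \<in> {snd (snd (p j))..snd (snd (p j)) + Ln j}"
    by blast
  obtain t where t: "t \<le> Ln i" "block_image (p i) (Ln i) t = chain_pos (fst (snd (p i))) z"
    using block_image_onto[of "p i" "fst (p i)" "fst (snd (p i))" "snd (snd (p i))"] z(1) by auto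
  obtain t' where t': "t' \<le> Ln j" "block_image (p j) (Ln j) t' = chain_pos (fst (snd (p i))) z"
    using block_image_onto[of "p j" "fst (p j)" "fst (snd (p j))" "snd (snd (p j))"] z(2) ij(4) by auto
  have "(chain_pos (K i) (X i + t), chain_pos (fst (snd (p i))) z) \<in> placement_graph p"
    "(chain_pos (K j) (X j + t'), chain_pos (fst (snd (p i))) z) \<in> placement_graph p"
    unfolding placement_graph_def
    by (rule rev_image_eqI[of "(i, t)"], use ij t in auto)
      (rule rev_image_eqI[of "(j, t')"], use ij t' in auto)
  moreover have "chain_pos (K i) (X i + t) \<noteq> chain_pos (K j) (X j + t')"
    using block_pos_inj ij t t' by blast
  ultimately have "\<not> inj_on snd (placement_graph p)" unfolding inj_on_def by force
  then show ?thesis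
    using permutes_extending_imp_inj(2) unfolding perms_following_def by blast
qed

lemma card_perms_following:
  assumes p: "p \<in> placements"
  shows "card (perms_following p) =
    (if non_overlapping (snd \<circ> p) then fact (n - (sum Ln I + card I)) else 0)"
proof (cases "non_overlapping (snd \<circ> p)")
  case True
  have "card (perms_following p) = fact (card {1..n} - card (placement_graph p))"
    unfolding perms_following_def
    by (rule card_permutes_extending[OF _ inj_on_fst_placement_graph
          inj_on_snd_placement_graph[OF p True] placement_graph_subset[OF p]]) simp
  then show ?thesis using True card_placement_graph[OF p] by simp
qed (simp add: overlapping_imp_no_following_perm[OF p])

lemma card_respecting_perms:
  "card {\<pi>. \<pi> permutes {1..n} \<and> respects_blocks \<pi>} =
     card {p \<in> placements. non_overlapping (snd \<circ> p)} * fact (n - (sum Ln I + card I))"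
proof -
  have "finite (perms_following p)" for p
    unfolding perms_following_def by (rule finite_subset[OF _ finite_permutations[of "{1..n}"]]) auto
  then have "card {\<pi>. \<pi> permutes {1..n} \<and> respects_blocks \<pi>} = (\<Sum>p\<in>placements. card (perms_following p))"
    unfolding respecting_perms_eq_Union using finite_placements perms_following_disjoint
    by (intro card_UN_disjoint) auto
  also have "\<dots> = (\<Sum>p\<in>placements. if non_overlapping (snd \<circ> p) then fact (n - (sum Ln I + card I)) else 0)"
    using card_perms_following by (intro sum.cong) auto
  also have "\<dots> = card {p \<in> placements. non_overlapping (snd \<circ> p)} * fact (n - (sum Ln I + card I))"
    using finite_placements by (simp add: sum.inter_filter[symmetric])
  finally show ?thesis .
qed

definition chain_targets :: "('i \<Rightarrow> nat \<times> nat) set" where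
  "chain_targets = {q \<in> PiE I (\<lambda>i. Sigma {1..d} (\<lambda>k. {y. y + Ln i < chain_len k})). non_overlapping q}"

lemma non_overlapping_cong: "(\<And>i. i \<in> I \<Longrightarrow> q i = q' i) \<Longrightarrow> non_overlapping q = non_overlapping q'"
  unfolding non_overlapping_def by simp

lemma card_nonoverlapping_placements:
  "card {p \<in> placements. non_overlapping (snd \<circ> p)} = 2 ^ card I * card chain_targets"
proof -
  have "bij_betw (\<lambda>p. (\<lambda>i\<in>I. fst (p i), \<lambda>i\<in>I. snd (p i))) {p \<in> placements. non_overlapping (snd \<circ> p)}
          (PiE I (\<lambda>_. UNIV :: bool set) \<times> chain_targets)"
  proof (rule bij_betw_byWitness[where f' = "\<lambda>(u, q). \<lambda>i\<in>I. (u i, q i)"])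
    show "(\<lambda>p. (\<lambda>i\<in>I. fst (p i), \<lambda>i\<in>I. snd (p i))) ` {p \<in> placements. non_overlapping (snd \<circ> p)}
        \<subseteq> PiE I (\<lambda>_. UNIV) \<times> chain_targets"
      by (auto simp: placements_def chain_targets_def block_targets_def PiE_iff
          cong: non_overlapping_cong)
    show "(\<lambda>(u, q). \<lambda>i\<in>I. (u i, q i)) ` (PiE I (\<lambda>_. UNIV) \<times> chain_targets)
        \<subseteq> {p \<in> placements. non_overlapping (snd \<circ> p)}"
      by (auto simp: placements_def chain_targets_def block_targets_def PiE_iff
          cong: non_overlapping_cong)
  qed (auto simp: placements_def chain_targets_def PiE_iff extensional_def fun_eq_iff)
  then have "card {p \<in> placements. non_overlapping (snd \<circ> p)} =
      card (PiE I (\<lambda>_. UNIV :: bool set) \<times> chain_targets)"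
    by (rule bij_betw_same_card)
  also have "\<dots> = 2 ^ card I * card chain_targets"
    by (simp add: card_cartesian_product card_PiE finite_I)
  finally show ?thesis .
qed

lemma card_chain_targets_fibre:
  assumes a: "a \<in> PiE I (\<lambda>_. {1..d})"
  shows "card {q \<in> chain_targets. \<forall>i\<in>I. fst (q i) = a i} =
    (\<Prod>k\<in>{1..d}. card (disjoint_placements (chain_len k) {i \<in> I. a i = k} Ln))"
proof -
  let ?F = "{q \<in> chain_targets. \<forall>i\<in>I. fst (q i) = a i}"
  let ?D = "\<lambda>k. disjoint_placements (chain_len k) {i \<in> I. a i = k} Ln"
  have "bij_betw (\<lambda>q. \<lambda>k\<in>{1..d}. \<lambda>i\<in>{i \<in> I. a i = k}. snd (q i)) ?F (PiE {1..d} ?D)"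
  proof (rule bij_betw_byWitness[where f' = "\<lambda>z. \<lambda>i\<in>I. (a i, z (a i) i)"])
    show "\<forall>q\<in>?F. (\<lambda>i\<in>I. (a i, (\<lambda>k\<in>{1..d}. \<lambda>i\<in>{i \<in> I. a i = k}. snd (q i)) (a i) i)) = q"
      using a by (auto simp: chain_targets_def PiE_iff extensional_def fun_eq_iff prod_eq_iff)
    show "\<forall>z\<in>PiE {1..d} ?D. (\<lambda>k\<in>{1..d}. \<lambda>i\<in>{i \<in> I. a i = k}. snd ((\<lambda>i\<in>I. (a i, z (a i) i)) i)) = z"
      by (auto simp: disjoint_placements_def PiE_iff extensional_def fun_eq_iff)
    show "(\<lambda>q. \<lambda>k\<in>{1..d}. \<lambda>i\<in>{i \<in> I. a i = k}. snd (q i)) ` ?F \<subseteq> PiE {1..d} ?D"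
      by (fastforce simp: chain_targets_def non_overlapping_def disjoint_placements_def PiE_iff)
    show "(\<lambda>z. \<lambda>i\<in>I. (a i, z (a i) i)) ` PiE {1..d} ?D \<subseteq> ?F"
      using a by (fastforce simp: chain_targets_def non_overlapping_def disjoint_placements_def PiE_iff)
  qed
  then show ?thesis by (simp add: bij_betw_same_card card_PiE)
qed

lemma card_chain_targets:
  "card chain_targets = (\<Sum>a\<in>PiE I (\<lambda>_. {1..d}).
     \<Prod>k\<in>{1..d}. card (disjoint_placements (chain_len k) {i \<in> I. a i = k} Ln))"
proof -
  let ?A = "PiE I (\<lambda>_. {1..d})"
  let ?F = "\<lambda>a. {q \<in> chain_targets. \<forall>i\<in>I. fst (q i) = a i}"
  have "finite (PiE I (\<lambda>i. Sigma {1..d} (\<lambda>k. {y. y + Ln i < chain_len k})))"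
    by (intro finite_PiE finite_I finite_SigmaI) (auto intro: finite_add_less)
  then have fin: "finite chain_targets" unfolding chain_targets_def by (rule rev_finite_subset) auto
  have "chain_targets = (\<Union>a\<in>?A. ?F a)"
  proof (intro equalityI subsetI)
    fix q assume q: "q \<in> chain_targets"
    then have "(\<lambda>i\<in>I. fst (q i)) \<in> ?A" by (auto simp: chain_targets_def PiE_iff)
    then show "q \<in> (\<Union>a\<in>?A. ?F a)" by (rule UN_I) (simp add: q)
  qed blast
  moreover have disj: "?F a \<inter> ?F a' = {}" if "a \<in> ?A" "a' \<in> ?A" "a \<noteq> a'" for a a'
  proof -
    have "\<exists>i\<in>I. a i \<noteq> a' i"
    proof (rule ccontr)
      assume "\<not> (\<exists>i\<in>I. a i \<noteq> a' i)"
      then have "a = a'" using that(1,2) by (intro PiE_ext) auto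
      then show False using that(3) by simp
    qed
    then show ?thesis by auto
  qed
  moreover have "card (\<Union>a\<in>?A. ?F a) = (\<Sum>a\<in>?A. card (?F a))"
  proof (rule card_UN_disjoint)
    show "finite ?A" by (simp add: finite_PiE finite_I)
    show "\<forall>a\<in>?A. finite (?F a)" using fin by simp
    show "\<forall>a\<in>?A. \<forall>a'\<in>?A. a \<noteq> a' \<longrightarrow> ?F a \<inter> ?F a' = {}" using disj by blast
  qed
  ultimately have "card chain_targets = (\<Sum>a\<in>?A. card (?F a))" by simp
  also have "\<dots> = (\<Sum>a\<in>?A. \<Prod>k\<in>{1..d}. card (disjoint_placements (chain_len k) {i \<in> I. a i = k} Ln))"
    by (rule sum.cong[OF refl]) (rule card_chain_targets_fibre)
  finally show ?thesis .
qed

lemma card_respecting_perms_eq: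
  "card {\<pi>. \<pi> permutes {1..n} \<and> respects_blocks \<pi>} =
     2 ^ card I * fact (n - (sum Ln I + card I)) * (\<Sum>a\<in>PiE I (\<lambda>_. {1..d}). \<Prod>k\<in>{1..d}.
       ((chain_len k - sum Ln {i \<in> I. a i = k}) choose card {i \<in> I. a i = k})
       * fact (card {i \<in> I. a i = k}))"
proof -
  have "card (disjoint_placements (chain_len k) {i \<in> I. a i = k} Ln) =
      ((chain_len k - sum Ln {i \<in> I. a i = k}) choose card {i \<in> I. a i = k})
      * fact (card {i \<in> I. a i = k})"
    for a k using finite_I by (simp add: card_disjoint_placements)
  then show ?thesis
    unfolding card_respecting_perms card_nonoverlapping_placements card_chain_targets
    by (simp add: mult_ac)
qed

end

context residue_chains
begin

definition edge_positions :: "nat set" where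
  "edge_positions = {i. 1 \<le> i \<and> i + d \<le> n}"

definition perms_with_edges :: "nat set \<Rightarrow> (nat \<Rightarrow> nat) set" where
  "perms_with_edges S = {\<pi>. \<pi> permutes {1..n} \<and> (\<forall>i\<in>S. \<bar>int (\<pi> (i + d)) - int (\<pi> i)\<bar> = int d)}"

lemma a_seq_inclusion_exclusion:
  "int (a_seq n d) = (\<Sum>S\<in>Pow edge_positions. (-1) ^ card S * int (card (perms_with_edges S)))"
proof -
  define P where "P = {\<pi>. \<pi> permutes {1..n}}"
  define bad where "bad \<pi> = {i \<in> edge_positions. \<bar>int (\<pi> (i + d)) - int (\<pi> i)\<bar> = int d}"
    for \<pi> :: "nat \<Rightarrow> nat"
  have fin: "finite edge_positions"
    unfolding edge_positions_def by (rule finite_subset[of _ "{..n}"]) auto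
  have a: "a_seq n d = card {\<pi> \<in> P. bad \<pi> = {}}"
    unfolding a_seq_def bad_def edge_positions_def P_def by (rule arg_cong[where f = card]) auto
  have "int (a_seq n d) = (\<Sum>S\<in>Pow edge_positions. (-1) ^ card S * int (card {\<pi> \<in> P. S \<subseteq> bad \<pi>}))"
    unfolding a by (rule inclusion_exclusion_bad_sets) (auto simp: P_def fin bad_def finite_permutations)
  also have "\<dots> = (\<Sum>S\<in>Pow edge_positions. (-1) ^ card S * int (card (perms_with_edges S)))"
    by (rule sum.cong[OF refl])
      (auto simp: perms_with_edges_def bad_def P_def intro!: arg_cong[where f = card])
  finally show ?thesis .
qed

text \<open>
  Entry \<open>j\<close> of a pattern on chain \<open>k\<close> records whether the constraint between positions
  \<open>j\<close> and \<open>j + 1\<close> of chain \<open>k\<close> is imposed.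
\<close>

definition edge_patterns :: "nat \<Rightarrow> bool list set" where
  "edge_patterns k = {bs. length bs = chain_len k - 1}"

definition edges_of :: "(nat \<Rightarrow> bool list) \<Rightarrow> nat set" where
  "edges_of b = {chain_pos k j | k j. k \<in> {1..d} \<and> j < length (b k) \<and> b k ! j}"

lemma edge_positions_chain_pos:
  "k \<in> {1..d} \<Longrightarrow> chain_pos k j \<in> edge_positions \<longleftrightarrow> j < chain_len k - 1"
  using chain_pos_le_iff[of k "Suc j"] chain_pos_pos[of k j]
  by (auto simp: edge_positions_def chain_pos_Suc)

lemma bij_betw_edges_of: "bij_betw edges_of (PiE {1..d} edge_patterns) (Pow edge_positions)"
proof (rule bij_betw_byWitness
    [where f' = "\<lambda>S. \<lambda>k\<in>{1..d}. map (\<lambda>j. chain_pos k j \<in> S) [0..<chain_len k - 1]"])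
  have mem: "chain_pos k j \<in> edges_of b \<longleftrightarrow> j < length (b k) \<and> b k ! j" if "k \<in> {1..d}" for b k j
    using that by (auto simp: edges_of_def chain_pos_eq_iff)
  show "\<forall>b\<in>PiE {1..d} edge_patterns.
      (\<lambda>k\<in>{1..d}. map (\<lambda>j. chain_pos k j \<in> edges_of b) [0..<chain_len k - 1]) = b"
  proof
    fix b assume b: "b \<in> PiE {1..d} edge_patterns"
    have "map (\<lambda>j. chain_pos k j \<in> edges_of b) [0..<chain_len k - 1] = b k" if "k \<in> {1..d}" for k
      using b that by (intro nth_equalityI) (auto simp: mem PiE_iff edge_patterns_def)
    then show "(\<lambda>k\<in>{1..d}. map (\<lambda>j. chain_pos k j \<in> edges_of b) [0..<chain_len k - 1]) = b"
      using b by (auto simp: PiE_iff extensional_def)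
  qed
  show "\<forall>S\<in>Pow edge_positions.
      edges_of (\<lambda>k\<in>{1..d}. map (\<lambda>j. chain_pos k j \<in> S) [0..<chain_len k - 1]) = S"
  proof
    fix S assume S: "S \<in> Pow edge_positions"
    show "edges_of (\<lambda>k\<in>{1..d}. map (\<lambda>j. chain_pos k j \<in> S) [0..<chain_len k - 1]) = S"
    proof (intro equalityI subsetI)
      fix x assume "x \<in> edges_of (\<lambda>k\<in>{1..d}. map (\<lambda>j. chain_pos k j \<in> S) [0..<chain_len k - 1])"
      then show "x \<in> S" by (auto simp: edges_of_def)
    next
      fix x assume x: "x \<in> S"
      then have "x \<in> {1..n}" using S d_pos by (auto simp: edge_positions_def)
      then obtain k j where kj: "k \<in> {1..d}" "x = chain_pos k j" by (metis chain_pos_surj)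
      moreover have "j < chain_len k - 1" using x S kj edge_positions_chain_pos by auto
      ultimately show "x \<in> edges_of (\<lambda>k\<in>{1..d}. map (\<lambda>j. chain_pos k j \<in> S) [0..<chain_len k - 1])"
        using x by (simp add: mem)
    qed
  qed
  show "edges_of ` PiE {1..d} edge_patterns \<subseteq> Pow edge_positions"
    using edge_positions_chain_pos by (auto simp: edges_of_def edge_patterns_def PiE_iff)
  show "(\<lambda>S. \<lambda>k\<in>{1..d}. map (\<lambda>j. chain_pos k j \<in> S) [0..<chain_len k - 1]) ` Pow edge_positions
      \<subseteq> PiE {1..d} edge_patterns"
    by (auto simp: edge_patterns_def)
qed

lemma card_edges_of:
  "card (edges_of b) = sum_list (concat (map (\<lambda>k. run_lengths (b k)) [1..<d+1]))"
proof -
  have "edges_of b = (\<Union>k\<in>{1..d}. chain_pos k ` {j. j < length (b k) \<and> b k ! j})"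
    unfolding edges_of_def by blast
  also have "card \<dots> = (\<Sum>k=1..d. card (chain_pos k ` {j. j < length (b k) \<and> b k ! j}))"
    by (rule card_UN_disjoint) (auto simp: chain_pos_eq_iff)
  also have "\<dots> = (\<Sum>k=1..d. card {j. j < length (b k) \<and> b k ! j})"
  proof (rule sum.cong[OF refl])
    fix k assume "k \<in> {1..d}"
    then have "inj_on (chain_pos k) A" for A using chain_pos_eq_iff by (auto intro: inj_onI)
    then show "card (chain_pos k ` {j. j < length (b k) \<and> b k ! j}) =
        card {j. j < length (b k) \<and> b k ! j}"
      by (rule card_image)
  qed
  also have "\<dots> = (\<Sum>k=1..d. sum_list (run_lengths (b k)))"
    by (simp only: card_true_positions)
  also have "\<dots> = sum_list (concat (map (\<lambda>k. run_lengths (b k)) [1..<d+1]))"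
    unfolding sum_atLeastAtMost_conv_sum_list by (simp add: sum_list_concat o_def)
  finally show ?thesis .
qed

definition runs_of :: "(nat \<Rightarrow> bool list) \<Rightarrow> (nat \<times> nat \<times> nat) list" where
  "runs_of b = concat (map (\<lambda>k. map (Pair k) (true_runs 0 (b k))) [1..<d+1])"

lemma mem_runs_of_iff:
  "(k, x, l) \<in> set (runs_of b) \<longleftrightarrow> k \<in> {1..d} \<and> (x, l) \<in> set (true_runs 0 (b k))"
  unfolding runs_of_def by auto

lemma edges_of_eq_runs_of:
  "edges_of b = {chain_pos k j | k x l j. (k, x, l) \<in> set (runs_of b) \<and> x \<le> j \<and> j < x + l}"
proof (intro equalityI subsetI)
  fix e assume "e \<in> edges_of b"
  then obtain k j where "k \<in> {1..d}" "j < length (b k)" "b k ! j" "e = chain_pos k j"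
    unfolding edges_of_def by blast
  then show "e \<in> {chain_pos k j | k x l j. (k, x, l) \<in> set (runs_of b) \<and> x \<le> j \<and> j < x + l}"
    using mem_true_runs_iff[of 0 "b k" j] unfolding mem_runs_of_iff by fastforce
next
  fix e assume "e \<in> {chain_pos k j | k x l j. (k, x, l) \<in> set (runs_of b) \<and> x \<le> j \<and> j < x + l}"
  then obtain k x l j where "k \<in> {1..d}" "(x, l) \<in> set (true_runs 0 (b k))" "x \<le> j" "j < x + l"
    "e = chain_pos k j" unfolding mem_runs_of_iff by blast
  then show "e \<in> edges_of b" unfolding edges_of_def using mem_true_runs_iff[of 0 "b k" j] by auto
qed

lemma run_lengths_eq_map_runs_of:
  "concat (map (\<lambda>k. run_lengths (b k)) [1..<d+1]) = map (\<lambda>r. snd (snd r)) (runs_of b)"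
  unfolding runs_of_def by (simp add: map_concat o_def flip: map_snd_true_runs[of 0])

lemma block_family_runs_of:
  assumes b: "b \<in> PiE {1..d} edge_patterns"
  defines "R \<equiv> runs_of b" and "L \<equiv> concat (map (\<lambda>k. run_lengths (b k)) [1..<d+1])"
  shows "block_family n d {1..length L} (\<lambda>i. fst (R ! (i - 1))) (\<lambda>i. fst (snd (R ! (i - 1))))
    (\<lambda>i. L ! (i - 1))"
proof -
  have L: "length L = length R" "\<And>i. i \<in> {1..length L} \<Longrightarrow> L ! (i - 1) = snd (snd (R ! (i - 1)))"
    unfolding L_def R_def run_lengths_eq_map_runs_of by auto
  have setR: "(k, x, l) \<in> set R \<longleftrightarrow> k \<in> {1..d} \<and> (x, l) \<in> set (true_runs 0 (b k))" for k x l
    unfolding R_def by (rule mem_runs_of_iff)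
  have nth: "R ! (i - 1) \<in> set R" if "i \<in> {1..length L}" for i
    using that L by auto
  have fits: "k \<in> {1..d} \<and> 1 \<le> l \<and> x + l < chain_len k" if "(k, x, l) \<in> set R" for k x l
    using that b true_runs_bounds[of x l 0 "b k"] chain_len_pos[of k]
    by (auto simp: setR PiE_iff edge_patterns_def)
  have "distinct R" unfolding R_def runs_of_def
    by (intro distinct_concat_map_Pair distinct_upt distinct_true_runs)
  then have neq: "R ! (i - 1) \<noteq> R ! (j - 1)" if "i \<in> {1..length L}" "j \<in> {1..length L}" "i \<noteq> j" for i j
    using that L by (auto simp: nth_eq_iff_index_eq)
  have sep: "{x..x + l} \<inter> {x'..x' + l'} = {}"
    if "(k, x, l) \<in> set R" "(k, x', l') \<in> set R" "(x, l) \<noteq> (x', l')" for k x l x' l'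
    using that true_runs_separated[of x l 0 "b k" x' l'] by (auto simp: setR)
  show ?thesis
  proof unfold_locales
    fix i j assume ij: "i \<in> {1..length L}" "j \<in> {1..length L}" "i \<noteq> j"
      and same: "fst (R ! (i - 1)) = fst (R ! (j - 1))"
    obtain k x l where ri: "R ! (i - 1) = (k, x, l)" by (cases "R ! (i - 1)")
    obtain k' x' l' where rj: "R ! (j - 1) = (k', x', l')" by (cases "R ! (j - 1)")
    show "{fst (snd (R ! (i - 1)))..fst (snd (R ! (i - 1))) + L ! (i - 1)} \<inter>
        {fst (snd (R ! (j - 1)))..fst (snd (R ! (j - 1))) + L ! (j - 1)} = {}"
      using sep[of k x l x' l'] nth[OF ij(1)] nth[OF ij(2)] neq[OF ij] same ri rj
        L(2)[OF ij(1)] L(2)[OF ij(2)]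
      by auto
  next
    fix i assume i: "i \<in> {1..length L}"
    then show "fst (R ! (i - 1)) \<in> {1..d}" "1 \<le> L ! (i - 1)"
      "fst (snd (R ! (i - 1))) + L ! (i - 1) < chain_len (fst (R ! (i - 1)))"
      using fits[of "fst (R ! (i - 1))" "fst (snd (R ! (i - 1)))" "snd (snd (R ! (i - 1)))"]
        nth L(2)[OF i]
      by auto
  qed (use d_pos d_less_n in auto)
qed

lemma block_edges_runs_of:
  assumes b: "b \<in> PiE {1..d} edge_patterns"
  defines "R \<equiv> runs_of b" and "L \<equiv> concat (map (\<lambda>k. run_lengths (b k)) [1..<d+1])"
  shows "block_family.block_edges d {1..length L} (\<lambda>i. fst (R ! (i - 1))) (\<lambda>i. fst (snd (R ! (i - 1))))
    (\<lambda>i. L ! (i - 1)) = edges_of b"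
proof -
  interpret B: block_family n d "{1..length L}" "\<lambda>i. fst (R ! (i - 1))" "\<lambda>i. fst (snd (R ! (i - 1)))"
    "\<lambda>i. L ! (i - 1)"
    unfolding R_def L_def by (rule block_family_runs_of[OF b])
  have L: "length L = length R" "\<And>i. i \<in> {1..length L} \<Longrightarrow> L ! (i - 1) = snd (snd (R ! (i - 1)))"
    unfolding L_def R_def run_lengths_eq_map_runs_of by auto
  have "B.block_edges = {chain_pos k j | k x l j. (k, x, l) \<in> set R \<and> x \<le> j \<and> j < x + l}"
  proof (intro equalityI subsetI)
    fix e assume "e \<in> B.block_edges"
    then obtain i j where i: "i \<in> {1..length L}" and j: "fst (snd (R ! (i - 1))) \<le> j"
      "j < fst (snd (R ! (i - 1))) + L ! (i - 1)" and e: "e = chain_pos (fst (R ! (i - 1))) j"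
      unfolding B.block_edges_def by blast
    obtain k x l where "R ! (i - 1) = (k, x, l)" by (cases "R ! (i - 1)")
    moreover have "R ! (i - 1) \<in> set R" using i L by auto
    ultimately show "e \<in> {chain_pos k j | k x l j. (k, x, l) \<in> set R \<and> x \<le> j \<and> j < x + l}"
      using j e L(2)[OF i] by auto
  next
    fix e assume "e \<in> {chain_pos k j | k x l j. (k, x, l) \<in> set R \<and> x \<le> j \<and> j < x + l}"
    then obtain k x l j where kxl: "(k, x, l) \<in> set R" "x \<le> j" "j < x + l" "e = chain_pos k j" by blast
    then obtain i where i: "i < length R" "R ! i = (k, x, l)" by (auto simp: in_set_conv_nth)
    then have "L ! (Suc i - 1) = l" using L(2)[of "Suc i"] L(1) by simp
    then show "e \<in> B.block_edges"
      unfolding B.block_edges_def using kxl i L(1) by (intro CollectI exI[of _ "Suc i"] exI[of _ j]) auto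
  qed
  also have "\<dots> = edges_of b"
    unfolding R_def by (rule edges_of_eq_runs_of[symmetric])
  finally show ?thesis .
qed

lemma card_perms_with_edges:
  assumes b: "b \<in> PiE {1..d} edge_patterns"
  defines "L \<equiv> concat (map (\<lambda>k. run_lengths (b k)) [1..<d+1])"
  shows "card (perms_with_edges (edges_of b)) =
    2 ^ length L * fact (n - (sum_list L + length L)) * q_nd n d L"
proof -
  define R where "R = runs_of b"
  interpret B: block_family n d "{1..length L}" "\<lambda>i. fst (R ! (i - 1))" "\<lambda>i. fst (snd (R ! (i - 1)))"
    "\<lambda>i. L ! (i - 1)"
    unfolding R_def L_def by (rule block_family_runs_of[OF b])
  have "B.block_edges = edges_of b" unfolding R_def L_def by (rule block_edges_runs_of[OF b])
  then have "perms_with_edges (edges_of b) = {\<pi>. \<pi> permutes {1..n} \<and> B.respects_blocks \<pi>}"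
    unfolding perms_with_edges_def B.respects_blocks_def by simp
  then show ?thesis
    using B.card_respecting_perms_eq unfolding q_nd_sum_assignments sum_list_conv_sum_1_based[of L]
    by simp
qed

lemma sum_edge_patterns_by_run_lengths:
  fixes h :: "(nat \<Rightarrow> nat list) \<Rightarrow> 'a::comm_semiring_1"
  shows "(\<Sum>b\<in>PiE {1..d} edge_patterns. h (\<lambda>k\<in>{1..d}. run_lengths (b k))) =
    (\<Sum>ls\<in>PiE {1..d} (\<lambda>k. bounded_compositions (chain_len k)).
       of_nat (\<Prod>k\<in>{1..d}. (chain_len k - sum_list (ls k)) choose length (ls k)) * h ls)"
proof -
  have "run_lengths bs \<in> bounded_compositions (chain_len k)"
    if "k \<in> {1..d}" "bs \<in> edge_patterns k" for k bs
    using that chain_len_pos[OF that(1)] sum_list_run_lengths_le[of bs] run_lengths_pos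
    by (fastforce simp: edge_patterns_def bounded_compositions_def)
  moreover have "finite (edge_patterns k)" for k
    using finite_lists_length_eq[of "UNIV :: bool set" "chain_len k - 1"] by (simp add: edge_patterns_def)
  ultimately have "(\<Sum>b\<in>PiE {1..d} edge_patterns. h (\<lambda>k\<in>{1..d}. run_lengths (b k))) =
    (\<Sum>ls\<in>PiE {1..d} (\<lambda>k. bounded_compositions (chain_len k)).
       of_nat (\<Prod>k\<in>{1..d}. card {bs \<in> edge_patterns k. run_lengths bs = ls k}) * h ls)"
    by (intro sum_PiE_group_by) (auto simp: finite_bounded_compositions)
  also have "\<dots> = (\<Sum>ls\<in>PiE {1..d} (\<lambda>k. bounded_compositions (chain_len k)).
       of_nat (\<Prod>k\<in>{1..d}. (chain_len k - sum_list (ls k)) choose length (ls k)) * h ls)"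
  proof (rule sum.cong[OF refl])
    fix ls assume ls: "ls \<in> PiE {1..d} (\<lambda>k. bounded_compositions (chain_len k))"
    have "card {bs \<in> edge_patterns k. run_lengths bs = ls k} =
        (chain_len k - sum_list (ls k)) choose length (ls k)"
      if k: "k \<in> {1..d}" for k
    proof -
      have "ls k \<in> bounded_compositions (chain_len k)" using ls k by (rule PiE_mem)
      then have "\<forall>x\<in>set (ls k). 1 \<le> x" by (simp add: bounded_compositions_def)
      moreover have
        "{bs \<in> edge_patterns k. run_lengths bs = ls k} = lists_with_runs (chain_len k - 1) (ls k)"
        unfolding edge_patterns_def lists_with_runs_def by blast
      ultimately show ?thesis using card_lists_with_runs chain_len_pos[OF k] by simp
    qed
    then show "of_nat (\<Prod>k\<in>{1..d}. card {bs \<in> edge_patterns k. run_lengths bs = ls k}) * h ls =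
        of_nat (\<Prod>k\<in>{1..d}. (chain_len k - sum_list (ls k)) choose length (ls k)) * h ls"
      by simp
  qed
  finally show ?thesis .
qed

definition run_weight :: "(nat \<Rightarrow> nat list) \<Rightarrow> int" where
  "run_weight ls = (let L = concat (map ls [1..<d+1]) in
     (-1) ^ sum_list L * 2 ^ length L * int (fact (n - (sum_list L + length L))) * int (q_nd n d L))"

lemma a_seq_sum_edge_patterns:
  "int (a_seq n d) = (\<Sum>b\<in>PiE {1..d} edge_patterns. run_weight (\<lambda>k\<in>{1..d}. run_lengths (b k)))"
proof -
  have "int (a_seq n d) = (\<Sum>S\<in>Pow edge_positions. (-1) ^ card S * int (card (perms_with_edges S)))"
    by (rule a_seq_inclusion_exclusion)
  also have "\<dots> = (\<Sum>b\<in>PiE {1..d} edge_patterns. run_weight (\<lambda>k\<in>{1..d}. run_lengths (b k)))"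
  proof (rule sum.reindex_bij_betw[OF bij_betw_edges_of, symmetric, THEN trans], rule sum.cong[OF refl])
    fix b assume b: "b \<in> PiE {1..d} edge_patterns"
    have restrict_map:
      "map (\<lambda>k\<in>{1..d}. run_lengths (b k)) [1..<d+1] = map (\<lambda>k. run_lengths (b k)) [1..<d+1]"
      by (rule map_cong) auto
    show "(-1) ^ card (edges_of b) * int (card (perms_with_edges (edges_of b))) =
        run_weight (\<lambda>k\<in>{1..d}. run_lengths (b k))"
      unfolding run_weight_def Let_def restrict_map card_edges_of card_perms_with_edges[OF b]
      by (simp del: upt_Suc)
  qed
  finally show ?thesis .
qed

theorem a_seq_formula:
  "int (a_seq n d) =
    (\<Sum>r \<in> PiE {1..d} (\<lambda>k. {0..<nk n d k}). \<Sum>c \<in> PiE {1..d} (\<lambda>k. {0..r k}).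
       (-1) ^ (\<Sum>k=1..d. r k) * 2 ^ (\<Sum>k=1..d. c k)
       * int (fact (n - (\<Sum>k=1..d. r k) - (\<Sum>k=1..d. c k)))
       * (\<Prod>k=1..d. int ((nk n d k - r k) choose c k))
       * (\<Sum>ls \<in> PiE {1..d} (\<lambda>k. compositions (r k) (c k)).
            int (q_nd n d (concat (map ls [1..<d+1])))))"
  (is "_ = (\<Sum>r \<in> _. \<Sum>c \<in> _. ?W r c * _)")
proof -
  have "int (a_seq n d) = (\<Sum>ls\<in>PiE {1..d} (\<lambda>k. bounded_compositions (chain_len k)).
      int (\<Prod>k\<in>{1..d}. (chain_len k - sum_list (ls k)) choose length (ls k)) * run_weight ls)"
    unfolding a_seq_sum_edge_patterns by (rule sum_edge_patterns_by_run_lengths)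
  also have "\<dots> = (\<Sum>ls\<in>PiE {1..d} (\<lambda>k. bounded_compositions (chain_len k)).
      ?W (\<lambda>k\<in>{1..d}. sum_list (ls k)) (\<lambda>k\<in>{1..d}. length (ls k))
      * int (q_nd n d (concat (map ls [1..<d+1]))))"
  proof (rule sum.cong[OF refl])
    fix ls :: "nat \<Rightarrow> nat list"
    have "(\<Prod>k=1..d. int ((nk n d k - (\<lambda>k\<in>{1..d}. sum_list (ls k)) k) choose (\<lambda>k\<in>{1..d}. length (ls k)) k))
        = int (\<Prod>k\<in>{1..d}. (chain_len k - sum_list (ls k)) choose length (ls k))"
      unfolding of_nat_prod by (rule prod.cong) auto
    then show "int (\<Prod>k\<in>{1..d}. (chain_len k - sum_list (ls k)) choose length (ls k)) * run_weight ls =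
        ?W (\<lambda>k\<in>{1..d}. sum_list (ls k)) (\<lambda>k\<in>{1..d}. length (ls k))
        * int (q_nd n d (concat (map ls [1..<d+1])))"
      unfolding sum_restrict_sum_list sum_restrict_length run_weight_def Let_def
      by (simp only: diff_diff_left mult_ac)
  qed
  also have "\<dots> = (\<Sum>r \<in> PiE {1..d} (\<lambda>k. {0..<nk n d k}). \<Sum>c \<in> PiE {1..d} (\<lambda>k. {0..r k}).
      \<Sum>ls \<in> PiE {1..d} (\<lambda>k. compositions (r k) (c k)).
        ?W r c * int (q_nd n d (concat (map ls [1..<d+1]))))"
    by (rule sum_compositions_regroup[symmetric]) simp
  finally show ?thesis by (simp add: sum_distrib_left)
qed

end

theorem mainTheorem2:
  fixes n d :: nat
  assumes "2 \<le> d" and "d < n"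
  shows "int (a_seq n d) =
    (\<Sum>r \<in> PiE {1..d} (\<lambda>k. {0..<nk n d k}). \<Sum>c \<in> PiE {1..d} (\<lambda>k. {0..r k}).
       (-1) ^ (\<Sum>k=1..d. r k) * 2 ^ (\<Sum>k=1..d. c k)
       * int (fact (n - (\<Sum>k=1..d. r k) - (\<Sum>k=1..d. c k)))
       * (\<Prod>k=1..d. int ((nk n d k - r k) choose c k))
       * (\<Sum>ls \<in> PiE {1..d} (\<lambda>k. compositions (r k) (c k)).
            int (q_nd n d (concat (map ls [1..<d+1])))))"
proof -
  \<comment> \<open>the formula holds for all \<open>d \<ge> 1\<close>; the hypothesis \<open>2 \<le> d\<close> is used only in this form\<close>
  interpret residue_chains n d using assms by unfold_locales auto
  show ?thesis by (rule a_seq_formula)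
qed

end
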